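(* Let $A$ be a Banach algebra and $\phi\in\Delta(A)$. If $A$ is pseudo-amenable, or if $A$ is approximately amenable, then $A$ is approximately left $\phi$-biprojective.
   Context: $\Delta(A)$ is the set of characters of $A$; $A\otimes_pA$ is the projective tensor product with $a\cdot(b\otimes c)=ab\otimes c$, $(b\otimes c)\cdot a=b\otimes ca$, $\pi_A(a\otimes b)=ab$. $A$ is pseudo-amenable if there is a (not necessarily bounded) net $(m_\alpha)$ in $A\otimes_pA$ with $a\cdot m_\alpha-m_\alpha\cdot a\to0$ and $\pi_A(m_\alpha)a\to a$ for all $a\in A$. $A$ is approximately amenable if for every Banach $A$-bimodule $X$ and every continuous derivation $D:A\to X^*$ there is a net $(x_\alpha)$ in $X^*$ with $D(a)=\lim_\alpha(a\cdot x_\alpha-x_\alpha\cdot a)$ for all $a\in A$. $A$ is approximately left $\phi$-biprojective if there is a net $(\rho_\alpha)$ of bounded linear maps $A\to A\otimes_pA$ such that for all $a,x\in A$: $\|a\cdot\rho_\alpha(x)-\rho_\alpha(ax)\|\to0$, $\|\rho_\alpha(xa)-\phi(a)\rho_\alpha(x)\|\to0$, and $\phi(\pi_A(\rho_\alpha(x)))-\phi(x)\to0$. *)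

theory Defs
  imports "HOL-Analysis.Analysis"
begin

class complex_banach_algebra = real_normed_algebra + banach +
  fixes scaleC :: "complex \<Rightarrow> 'a \<Rightarrow> 'a"
  assumes scaleC_add_right: "scaleC c (x + y) = scaleC c x + scaleC c y"
    and scaleC_add_left: "scaleC (c + d) x = scaleC c x + scaleC d x"
    and scaleC_scaleC: "scaleC c (scaleC d x) = scaleC (c * d) x"
    and scaleC_one: "scaleC 1 x = x"
    and scaleC_of_real: "scaleC (of_real r) x = scaleR r x"
    and norm_scaleC: "norm (scaleC c x) = cmod c * norm x"
    and mult_scaleC_left: "scaleC c x * y = scaleC c (x * y)"
    and mult_scaleC_right: "x * scaleC c y = scaleC c (x * y)"

definition is_character :: "('a::complex_banach_algebra \<Rightarrow> complex) \<Rightarrow> bool" where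
  "is_character \<phi> \<longleftrightarrow>
     (\<forall>x y. \<phi> (x + y) = \<phi> x + \<phi> y) \<and>
     (\<forall>c x. \<phi> (scaleC c x) = c * \<phi> x) \<and>
     (\<forall>x y. \<phi> (x * y) = \<phi> x * \<phi> y) \<and>
     (\<exists>x. \<phi> x \<noteq> 0)"

text \<open>Elements of the projective tensor product are represented by sequences
  (a_n, b_n) with sum of norm a_n * norm b_n finite (the element sum a_n \<otimes> b_n).
  Two representations denote the same element iff every bounded bilinear form
  (the dual of A \<otimes>p A) takes the same value on them; the projective norm is the
  infimum of sum norm a_n * norm b_n over all representations.\<close>

definition trep :: "(nat \<Rightarrow> 'a::complex_banach_algebra \<times> 'a) \<Rightarrow> bool" where
  "trep t \<longleftrightarrow> summable (\<lambda>n. norm (fst (t n)) * norm (snd (t n)))"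

definition bounded_bilinear_form :: "('a::complex_banach_algebra \<Rightarrow> 'a \<Rightarrow> complex) \<Rightarrow> bool" where
  "bounded_bilinear_form B \<longleftrightarrow>
     (\<forall>a b c. B (a + b) c = B a c + B b c) \<and>
     (\<forall>a b c. B a (b + c) = B a b + B a c) \<and>
     (\<forall>k a b. B (scaleC k a) b = k * B a b) \<and>
     (\<forall>k a b. B a (scaleC k b) = k * B a b) \<and>
     (\<exists>K. \<forall>a b. cmod (B a b) \<le> K * norm a * norm b)"

definition tev :: "('a::complex_banach_algebra \<Rightarrow> 'a \<Rightarrow> complex) \<Rightarrow> (nat \<Rightarrow> 'a \<times> 'a) \<Rightarrow> complex" where
  "tev B t = (\<Sum>n. B (fst (t n)) (snd (t n)))"

definition teq :: "(nat \<Rightarrow> 'a::complex_banach_algebra \<times> 'a) \<Rightarrow> (nat \<Rightarrow> 'a \<times> 'a) \<Rightarrow> bool" where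
  "teq t s \<longleftrightarrow> (\<forall>B. bounded_bilinear_form B \<longrightarrow> tev B t = tev B s)"

definition pnorm :: "(nat \<Rightarrow> 'a::complex_banach_algebra \<times> 'a) \<Rightarrow> real" where
  "pnorm t = Inf {(\<Sum>n. norm (fst (s n)) * norm (snd (s n))) | s. trep s \<and> teq s t}"

definition tlact :: "'a::complex_banach_algebra \<Rightarrow> (nat \<Rightarrow> 'a \<times> 'a) \<Rightarrow> (nat \<Rightarrow> 'a \<times> 'a)" where
  "tlact a t = (\<lambda>n. (a * fst (t n), snd (t n)))"

definition tract :: "(nat \<Rightarrow> 'a::complex_banach_algebra \<times> 'a) \<Rightarrow> 'a \<Rightarrow> (nat \<Rightarrow> 'a \<times> 'a)" where
  "tract t a = (\<lambda>n. (fst (t n), snd (t n) * a))"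

definition tscale :: "complex \<Rightarrow> (nat \<Rightarrow> 'a::complex_banach_algebra \<times> 'a) \<Rightarrow> (nat \<Rightarrow> 'a \<times> 'a)" where
  "tscale c t = (\<lambda>n. (scaleC c (fst (t n)), snd (t n)))"

definition tadd :: "(nat \<Rightarrow> 'a::complex_banach_algebra \<times> 'a) \<Rightarrow> (nat \<Rightarrow> 'a \<times> 'a) \<Rightarrow> (nat \<Rightarrow> 'a \<times> 'a)" where
  "tadd t s = (\<lambda>n. if even n then t (n div 2) else s (n div 2))"

definition tdiff :: "(nat \<Rightarrow> 'a::complex_banach_algebra \<times> 'a) \<Rightarrow> (nat \<Rightarrow> 'a \<times> 'a) \<Rightarrow> (nat \<Rightarrow> 'a \<times> 'a)" where
  "tdiff t s = tadd t (tscale (-1) s)"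

definition tpi :: "(nat \<Rightarrow> 'a::complex_banach_algebra \<times> 'a) \<Rightarrow> 'a" where
  "tpi t = (\<Sum>n. fst (t n) * snd (t n))"

text \<open>A net in A \<otimes>p A is encoded by a proper filter on representations (any net
  induces such a filter, its image filter, and conversely).\<close>

definition pseudo_amenable :: "'a::complex_banach_algebra itself \<Rightarrow> bool" where
  "pseudo_amenable _ \<longleftrightarrow>
     (\<exists>F :: (nat \<Rightarrow> 'a \<times> 'a) filter.
        F \<noteq> bot \<and> eventually trep F \<and>
        (\<forall>a. ((\<lambda>m. pnorm (tdiff (tlact a m) (tract m a))) \<longlongrightarrow> 0) F) \<and>
        (\<forall>a. ((\<lambda>m. tpi m * a) \<longlongrightarrow> a) F))"

record ('a, 'x) bimod =
  bcarrier :: "'x set"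
  bzero :: 'x
  badd :: "'x \<Rightarrow> 'x \<Rightarrow> 'x"
  bscale :: "complex \<Rightarrow> 'x \<Rightarrow> 'x"
  bnorm :: "'x \<Rightarrow> real"
  blact :: "'a \<Rightarrow> 'x \<Rightarrow> 'x"
  bract :: "'x \<Rightarrow> 'a \<Rightarrow> 'x"

definition banach_bimodule :: "('a::complex_banach_algebra, 'x) bimod \<Rightarrow> bool" where
  "banach_bimodule M \<longleftrightarrow>
    (let C = bcarrier M; z = bzero M; ad = badd M; sc = bscale M; nm = bnorm M;
         la = blact M; ra = bract M in
     \<comment> \<open>closure\<close>
     z \<in> C \<and>
     (\<forall>x\<in>C. \<forall>y\<in>C. ad x y \<in> C) \<and>
     (\<forall>c. \<forall>x\<in>C. sc c x \<in> C) \<and>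
     (\<forall>a. \<forall>x\<in>C. la a x \<in> C) \<and>
     (\<forall>a. \<forall>x\<in>C. ra x a \<in> C) \<and>
     \<comment> \<open>complex vector space\<close>
     (\<forall>x\<in>C. \<forall>y\<in>C. \<forall>w\<in>C. ad (ad x y) w = ad x (ad y w)) \<and>
     (\<forall>x\<in>C. \<forall>y\<in>C. ad x y = ad y x) \<and>
     (\<forall>x\<in>C. ad z x = x) \<and>
     (\<forall>x\<in>C. ad x (sc (-1) x) = z) \<and>
     (\<forall>c. \<forall>x\<in>C. \<forall>y\<in>C. sc c (ad x y) = ad (sc c x) (sc c y)) \<and>
     (\<forall>c d. \<forall>x\<in>C. sc (c + d) x = ad (sc c x) (sc d x)) \<and>
     (\<forall>c d. \<forall>x\<in>C. sc c (sc d x) = sc (c * d) x) \<and>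
     (\<forall>x\<in>C. sc 1 x = x) \<and>
     \<comment> \<open>norm\<close>
     (\<forall>x\<in>C. nm x \<ge> 0) \<and>
     (\<forall>x\<in>C. nm x = 0 \<longleftrightarrow> x = z) \<and>
     (\<forall>x\<in>C. \<forall>y\<in>C. nm (ad x y) \<le> nm x + nm y) \<and>
     (\<forall>c. \<forall>x\<in>C. nm (sc c x) = cmod c * nm x) \<and>
     \<comment> \<open>completeness\<close>
     (\<forall>s. (\<forall>n. s n \<in> C) \<longrightarrow>
          (\<forall>e>0. \<exists>N. \<forall>m\<ge>N. \<forall>n\<ge>N. nm (ad (s m) (sc (-1) (s n))) < e) \<longrightarrow>
          (\<exists>l\<in>C. (\<lambda>n. nm (ad (s n) (sc (-1) l))) \<longlonglongrightarrow> 0)) \<and>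
     \<comment> \<open>bimodule axioms\<close>
     (\<forall>a b. \<forall>x\<in>C. la (a * b) x = la a (la b x)) \<and>
     (\<forall>a b. \<forall>x\<in>C. ra x (a * b) = ra (ra x a) b) \<and>
     (\<forall>a b. \<forall>x\<in>C. ra (la a x) b = la a (ra x b)) \<and>
     (\<forall>a b. \<forall>x\<in>C. la (a + b) x = ad (la a x) (la b x)) \<and>
     (\<forall>a b. \<forall>x\<in>C. ra x (a + b) = ad (ra x a) (ra x b)) \<and>
     (\<forall>a. \<forall>x\<in>C. \<forall>y\<in>C. la a (ad x y) = ad (la a x) (la a y)) \<and>
     (\<forall>a. \<forall>x\<in>C. \<forall>y\<in>C. ra (ad x y) a = ad (ra x a) (ra y a)) \<and>
     (\<forall>c a. \<forall>x\<in>C. la (scaleC c a) x = sc c (la a x)) \<and>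
     (\<forall>c a. \<forall>x\<in>C. ra x (scaleC c a) = sc c (ra x a)) \<and>
     (\<forall>c a. \<forall>x\<in>C. la a (sc c x) = sc c (la a x)) \<and>
     (\<forall>c a. \<forall>x\<in>C. ra (sc c x) a = sc c (ra x a)) \<and>
     (\<exists>K. \<forall>a. \<forall>x\<in>C. nm (la a x) \<le> K * norm a * nm x) \<and>
     (\<exists>K. \<forall>a. \<forall>x\<in>C. nm (ra x a) \<le> K * norm a * nm x))"

text \<open>The dual X*: bounded linear functionals on the carrier (compared on the carrier only).\<close>

definition in_dual :: "('a, 'x) bimod \<Rightarrow> ('x \<Rightarrow> complex) \<Rightarrow> bool" where
  "in_dual M f \<longleftrightarrow>
     (\<forall>x\<in>bcarrier M. \<forall>y\<in>bcarrier M. f (badd M x y) = f x + f y) \<and>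
     (\<forall>c. \<forall>x\<in>bcarrier M. f (bscale M c x) = c * f x) \<and>
     (\<exists>K. \<forall>x\<in>bcarrier M. cmod (f x) \<le> K * bnorm M x)"

definition dnorm :: "('a, 'x) bimod \<Rightarrow> ('x \<Rightarrow> complex) \<Rightarrow> real" where
  "dnorm M f = Sup ((\<lambda>x. cmod (f x)) ` {x \<in> bcarrier M. bnorm M x \<le> 1})"

definition dlact :: "('a, 'x) bimod \<Rightarrow> 'a \<Rightarrow> ('x \<Rightarrow> complex) \<Rightarrow> ('x \<Rightarrow> complex)" where
  "dlact M a f = (\<lambda>x. f (bract M x a))"

definition dract :: "('a, 'x) bimod \<Rightarrow> ('x \<Rightarrow> complex) \<Rightarrow> 'a \<Rightarrow> ('x \<Rightarrow> complex)" where
  "dract M f a = (\<lambda>x. f (blact M a x))"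

definition continuous_derivation ::
  "('a::complex_banach_algebra, 'x) bimod \<Rightarrow> ('a \<Rightarrow> 'x \<Rightarrow> complex) \<Rightarrow> bool" where
  "continuous_derivation M D \<longleftrightarrow>
     (\<forall>a. in_dual M (D a)) \<and>
     (\<forall>a b. \<forall>x\<in>bcarrier M. D (a + b) x = D a x + D b x) \<and>
     (\<forall>c a. \<forall>x\<in>bcarrier M. D (scaleC c a) x = c * D a x) \<and>
     (\<forall>a b. \<forall>x\<in>bcarrier M. D (a * b) x = dlact M a (D b) x + dract M (D a) b x) \<and>
     (\<exists>K. \<forall>a. dnorm M (D a) \<le> K * norm a)"

definition approx_inner ::
  "('a::complex_banach_algebra, 'x) bimod \<Rightarrow> ('a \<Rightarrow> 'x \<Rightarrow> complex) \<Rightarrow> bool" where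
  "approx_inner M D \<longleftrightarrow>
     (\<exists>F :: ('x \<Rightarrow> complex) filter.
        F \<noteq> bot \<and> eventually (in_dual M) F \<and>
        (\<forall>a. ((\<lambda>f. dnorm M (\<lambda>x. D a x - (dlact M a f x - dract M f a x))) \<longlongrightarrow> 0) F))"

definition approximately_amenable :: "'a::complex_banach_algebra itself \<Rightarrow> bool" where
  "approximately_amenable _ \<longleftrightarrow>
     (\<forall>(M :: ('a, ('a \<Rightarrow> complex) \<Rightarrow> complex) bimod) D.
        banach_bimodule M \<and> continuous_derivation M D \<longrightarrow> approx_inner M D)"

text \<open>A bounded linear map A \<rightarrow> A \<otimes>p A is encoded as a map into representations that
  is linear modulo equivalence of representations and bounded for the projective norm.\<close>

definition bounded_linear_to_tensor ::
  "('a::complex_banach_algebra \<Rightarrow> (nat \<Rightarrow> 'a \<times> 'a)) \<Rightarrow> bool" where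
  "bounded_linear_to_tensor \<rho> \<longleftrightarrow>
     (\<forall>x. trep (\<rho> x)) \<and>
     (\<forall>x y. teq (\<rho> (x + y)) (tadd (\<rho> x) (\<rho> y))) \<and>
     (\<forall>c x. teq (\<rho> (scaleC c x)) (tscale c (\<rho> x))) \<and>
     (\<exists>K. \<forall>x. pnorm (\<rho> x) \<le> K * norm x)"

definition approx_left_phi_biprojective ::
  "('a::complex_banach_algebra \<Rightarrow> complex) \<Rightarrow> bool" where
  "approx_left_phi_biprojective \<phi> \<longleftrightarrow>
     (\<exists>F :: ('a \<Rightarrow> (nat \<Rightarrow> 'a \<times> 'a)) filter.
        F \<noteq> bot \<and> eventually bounded_linear_to_tensor F \<and>
        (\<forall>a x. ((\<lambda>\<rho>. pnorm (tdiff (tlact a (\<rho> x)) (\<rho> (a * x)))) \<longlongrightarrow> 0) F) \<and>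
        (\<forall>a x. ((\<lambda>\<rho>. pnorm (tdiff (\<rho> (x * a)) (tscale (\<phi> a) (\<rho> x)))) \<longlongrightarrow> 0) F) \<and>
        (\<forall>x. ((\<lambda>\<rho>. \<phi> (tpi (\<rho> x)) - \<phi> x) \<longlongrightarrow> 0) F))"

end

theory Submission
  imports Defs "HOL-Library.Function_Algebras"
begin

text \<open>Both hypotheses yield a net \<open>(m\<^sub>\<alpha>)\<close> in \<open>A \<otimes>\<^sub>p A\<close> with \<open>a\<cdot>m\<^sub>\<alpha> - \<phi>(a) m\<^sub>\<alpha> \<rightarrow> 0\<close> and
  \<open>\<phi>(\<pi>\<^sub>A(m\<^sub>\<alpha>)) \<rightarrow> 1\<close>, and then \<open>\<rho>\<^sub>\<alpha>(x) = \<phi>(x) m\<^sub>\<alpha>\<close> witnesses approximate left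
  \<open>\<phi>\<close>-biprojectivity. For a pseudo-amenable \<open>A\<close> one collapses the approximate diagonal by
  \<open>a \<otimes> b \<mapsto> \<phi>(b) a \<otimes> w\<close> with \<open>\<phi>(w) = 1\<close>. For an approximately amenable \<open>A\<close> one first shows
  that \<open>A\<close> is left \<open>\<phi>\<close>-approximately amenable, i.e. has a net \<open>v\<^sub>\<alpha>\<close> with \<open>\<phi>(v\<^sub>\<alpha>) = 1\<close> and
  \<open>a v\<^sub>\<alpha> - \<phi>(a) v\<^sub>\<alpha> \<rightarrow> 0\<close>, and takes \<open>m\<^sub>\<alpha> = v\<^sub>\<alpha> \<otimes> w\<close>. Otherwise Hahn--Banach produces
  functionals \<open>f\<^sub>a\<close> in the unit ball of \<open>(ker \<phi>)*\<close> for finitely many \<open>a\<close>, and the derivation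
  \<open>D(a) = (f \<mapsto> f(a u - \<phi>(a) u))\<close> into \<open>(ker \<phi>)**\<close> cannot be approximately inner: the
  commutators \<open>a\<cdot>g - g\<cdot>a\<close> sum to zero on \<open>(f\<^sub>a)\<close>, while \<open>\<Sum>\<^sub>a D(a)(f\<^sub>a)\<close> has real part
  bounded away from zero.\<close>

section \<open>Characters\<close>

lemma character_add: "is_character \<phi> \<Longrightarrow> \<phi> (x + y) = \<phi> x + \<phi> y"
  and character_scaleC: "is_character \<phi> \<Longrightarrow> \<phi> (scaleC c x) = c * \<phi> x"
  and character_mult: "is_character \<phi> \<Longrightarrow> \<phi> (x * y) = \<phi> x * \<phi> y"
  by (simp_all add: is_character_def)

lemma character_zero: "is_character \<phi> \<Longrightarrow> \<phi> 0 = 0"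
  using character_add[of \<phi> 0 0] by simp

lemma character_diff: "is_character \<phi> \<Longrightarrow> \<phi> (x - y) = \<phi> x - \<phi> y"
  using character_add[of \<phi> "x - y" y] by simp

lemma character_scaleR: "is_character \<phi> \<Longrightarrow> \<phi> (r *\<^sub>R x) = of_real r * \<phi> x"
  using character_scaleC[of \<phi> "of_real r" x] by (simp add: scaleC_of_real)

lemma character_obtain_unit:
  assumes "is_character \<phi>"
  obtains u where "\<phi> u = 1"
proof -
  obtain x where "\<phi> x \<noteq> 0" using assms by (auto simp: is_character_def)
  then show ?thesis using that[of "scaleC (1 / \<phi> x) x"] assms by (simp add: character_scaleC)
qed

lemma scaleC_zero_right: "scaleC c (0::'a::complex_banach_algebra) = 0"
  using scaleC_add_right[of c "0::'a" 0] by simp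

lemma scaleC_minus_left: "scaleC (- c) x = - scaleC c (x::'a::complex_banach_algebra)"
proof -
  have "scaleC c x + scaleC (- c) x = 0"
    using scaleC_add_left[of c "- c" x] scaleC_of_real[of 0 x] by simp
  then show ?thesis by (rule minus_unique[symmetric])
qed

lemma scaleC_diff_right: "scaleC c (x - y::'a::complex_banach_algebra) = scaleC c x - scaleC c y"
  using scaleC_add_right[of c "x - y" y] by simp

lemma scaleC_scaleR_commute: "scaleC c (r *\<^sub>R x) = r *\<^sub>R scaleC c (x::'a::complex_banach_algebra)"
  by (metis mult.commute scaleC_of_real scaleC_scaleC)

lemma scaleC_Re_Im: "scaleC c x = Re c *\<^sub>R x + Im c *\<^sub>R scaleC \<i> (x::'a::complex_banach_algebra)"
proof -
  have "scaleC c x = scaleC (of_real (Re c) + of_real (Im c) * \<i>) x"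
    by (simp add: complex_eq[symmetric] mult.commute)
  also have "\<dots> = Re c *\<^sub>R x + Im c *\<^sub>R scaleC \<i> x"
    by (simp add: scaleC_add_left scaleC_scaleC[symmetric] scaleC_of_real)
  finally show ?thesis .
qed

lemma bounded_linear_scaleC: "bounded_linear (scaleC c :: 'a::complex_banach_algebra \<Rightarrow> 'a)"
  by (rule bounded_linear_intro[where K="cmod c"])
    (auto simp: scaleC_add_right scaleC_scaleR_commute norm_scaleC)

text \<open>Automatic continuity: if \<open>\<bar>\<phi> x\<bar> > \<parallel>x\<parallel>\<close>, then \<open>y = x / \<phi> x\<close> has \<open>\<parallel>y\<parallel> < 1\<close>,
  so \<open>z = \<Sum>n. y\<^sup>n\<^sup>+\<^sup>1\<close> converges and satisfies \<open>z = y z + y\<close>; applying \<open>\<phi>\<close> gives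
  \<open>\<phi> z = \<phi> z + 1\<close>.\<close>

lemma norm_character_le:
  fixes \<phi> :: "'a::complex_banach_algebra \<Rightarrow> complex"
  assumes ch: "is_character \<phi>"
  shows "cmod (\<phi> x) \<le> norm x"
proof (rule ccontr)
  assume "\<not> ?thesis"
  hence lt: "norm x < cmod (\<phi> x)" and nz: "\<phi> x \<noteq> 0" by auto
  define y where "y = scaleC (1 / \<phi> x) x"
  have \<phi>y: "\<phi> y = 1" using nz by (simp add: y_def character_scaleC[OF ch])
  have ny: "norm y < 1" using lt nz by (simp add: y_def norm_scaleC norm_divide field_simps)
  define p where "p = rec_nat y (\<lambda>_ q. y * q)"
  have p0: "p 0 = y" and pSuc: "p (Suc n) = y * p n" for n by (simp_all add: p_def)
  have norm_p: "norm (p n) \<le> norm y ^ Suc n" for n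
  proof (induction n)
    case (Suc n)
    have "norm (p (Suc n)) \<le> norm y * norm (p n)" by (simp add: pSuc norm_mult_ineq)
    also have "\<dots> \<le> norm y * norm y ^ Suc n" by (rule mult_left_mono[OF Suc]) simp
    finally show ?case by simp
  qed (simp add: p0)
  have "summable (\<lambda>n. norm y ^ Suc n)"
    using summable_geometric[of "norm y"] ny by (simp add: summable_mult)
  hence sp: "summable p" by (rule summable_comparison_test[rotated]) (use norm_p in auto)
  define z where "z = suminf p"
  have "(\<lambda>n. y * p n) sums (y * z)"
    unfolding z_def by (rule bounded_linear.sums[OF bounded_linear_mult_right summable_sums[OF sp]])
  hence "p sums (y * z + y)" by (simp add: pSuc[symmetric] sums_Suc_iff p0)
  hence "z = y * z + y" using sp by (simp add: z_def sums_iff)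
  hence "\<phi> z = \<phi> y * \<phi> z + \<phi> y" by (metis character_add[OF ch] character_mult[OF ch])
  thus False using \<phi>y by simp
qed

lemma bounded_linear_character: "is_character \<phi> \<Longrightarrow> bounded_linear \<phi>"
  by (rule bounded_linear_intro[where K=1])
    (auto simp: character_add character_scaleR norm_character_le scaleR_conv_of_real)

lemma character_suminf:
  assumes "is_character \<phi>" "summable f"
  shows "\<phi> (suminf f) = (\<Sum>n. \<phi> (f n))"
  by (rule bounded_linear.suminf[OF bounded_linear_character]) (use assms in auto)

abbreviation left_defect :: "('a::complex_banach_algebra \<Rightarrow> complex) \<Rightarrow> 'a \<Rightarrow> 'a \<Rightarrow> 'a" where
  "left_defect \<phi> a v \<equiv> a * v - scaleC (\<phi> a) v"

lemma character_left_defect: "is_character \<phi> \<Longrightarrow> \<phi> (left_defect \<phi> a v) = 0"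
  by (simp add: character_diff character_mult character_scaleC)

lemma norm_left_defect_le:
  assumes "is_character \<phi>"
  shows "norm (left_defect \<phi> a v) \<le> 2 * norm a * norm v"
proof -
  have "norm (left_defect \<phi> a v) \<le> norm (a * v) + norm (scaleC (\<phi> a) v)"
    by (rule norm_triangle_ineq4)
  also have "\<dots> \<le> norm a * norm v + norm a * norm v"
    by (intro add_mono norm_mult_ineq)
      (simp add: norm_scaleC mult_right_mono norm_character_le[OF assms])
  finally show ?thesis by simp
qed

lemma bounded_bilinear_formD:
  assumes "bounded_bilinear_form B"
  shows "B (a + b) c = B a c + B b c" and "B (scaleC k a) b = k * B a b"
    and "\<exists>K. \<forall>a b. cmod (B a b) \<le> K * norm a * norm b"
  using assms by (simp_all add: bounded_bilinear_form_def)

lemma bounded_bilinear_form_zero_left: "bounded_bilinear_form B \<Longrightarrow> B 0 b = 0"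
  using bounded_bilinear_formD(1)[of B 0 0 b] by simp

lemma bounded_bilinear_form_diff_left: "bounded_bilinear_form B \<Longrightarrow> B (a - a') b = B a b - B a' b"
  using bounded_bilinear_formD(1)[of B "a - a'" a' b] by simp

section \<open>Representations of tensors\<close>

definition tnorm :: "(nat \<Rightarrow> 'a::complex_banach_algebra \<times> 'a) \<Rightarrow> real" where
  "tnorm t = (\<Sum>n. norm (fst (t n)) * norm (snd (t n)))"

lemma tnorm_nonneg: "trep t \<Longrightarrow> 0 \<le> tnorm t"
  unfolding tnorm_def trep_def by (rule suminf_nonneg) auto

lemma summable_tev:
  assumes "trep t" "bounded_bilinear_form B"
  shows "summable (\<lambda>n. B (fst (t n)) (snd (t n)))"
proof -
  obtain K where K: "\<And>a b. cmod (B a b) \<le> K * norm a * norm b"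
    using bounded_bilinear_formD(3)[OF assms(2)] by blast
  have "summable (\<lambda>n. K * (norm (fst (t n)) * norm (snd (t n))))"
    using assms(1) by (simp add: trep_def summable_mult)
  then show ?thesis
    by (rule summable_comparison_test[rotated]) (use K in \<open>auto simp: mult.assoc\<close>)
qed

lemma summable_tpi: "trep t \<Longrightarrow> summable (\<lambda>n. fst (t n) * snd (t n))"
  unfolding trep_def
  by (rule summable_norm_cancel, rule summable_comparison_test[rotated]) (auto simp: norm_mult_ineq)

lemma sums_interleave:
  fixes g h :: "nat \<Rightarrow> 'b::real_normed_vector"
  assumes "g sums G" "h sums H"
  shows "(\<lambda>n. if even n then g (n div 2) else h (n div 2)) sums (G + H)"
proof -
  define ge where "ge n = (if even n then g (n div 2) else 0)" for n
  define ho where "ho n = (if even n then 0 else h (n div 2))" for n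
  have "(\<lambda>k. ge (2 * k)) sums G" using assms(1) by (simp add: ge_def)
  hence "ge sums G"
    by (subst (asm) sums_mono_reindex) (auto simp: strict_mono_def ge_def elim!: evenE)
  moreover have "(\<lambda>k. ho (2 * k + 1)) sums H" using assms(2) by (simp add: ho_def)
  hence "ho sums H"
    by (subst (asm) sums_mono_reindex) (auto simp: strict_mono_def ho_def elim!: oddE)
  ultimately have "(\<lambda>n. ge n + ho n) sums (G + H)" by (rule sums_add)
  then show ?thesis by (simp add: ge_def ho_def if_distrib cong: if_cong)
qed

lemma trep_tadd: "trep t \<Longrightarrow> trep s \<Longrightarrow> trep (tadd t s)"
  unfolding trep_def tadd_def
  using sums_interleave[OF summable_sums summable_sums,
      of "\<lambda>n. norm (fst (t n)) * norm (snd (t n))" "\<lambda>n. norm (fst (s n)) * norm (snd (s n))"]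
  by (auto simp: sums_iff if_distrib cong: if_cong)

lemma tev_tadd:
  "trep t \<Longrightarrow> trep s \<Longrightarrow> bounded_bilinear_form B \<Longrightarrow> tev B (tadd t s) = tev B t + tev B s"
  unfolding tev_def tadd_def
  using sums_interleave[OF summable_sums[OF summable_tev] summable_sums[OF summable_tev], of t B s]
  by (auto simp: sums_iff if_distrib cong: if_cong)

lemma trep_tscale: "trep t \<Longrightarrow> trep (tscale c t)"
  unfolding trep_def tscale_def by (simp add: norm_scaleC mult.assoc summable_mult)

lemma tnorm_tscale: "trep t \<Longrightarrow> tnorm (tscale c t) = cmod c * tnorm t"
  unfolding tnorm_def tscale_def trep_def by (simp add: norm_scaleC mult.assoc suminf_mult)

lemma tev_tscale: "trep t \<Longrightarrow> bounded_bilinear_form B \<Longrightarrow> tev B (tscale c t) = c * tev B t"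
  using summable_tev[of t B] unfolding tev_def tscale_def
  by (simp add: bounded_bilinear_formD(2) suminf_mult)

lemma tpi_tscale: "trep t \<Longrightarrow> tpi (tscale c t) = scaleC c (tpi t)"
  unfolding tpi_def tscale_def
  using bounded_linear.suminf[OF bounded_linear_scaleC summable_tpi, of t c]
  by (simp add: mult_scaleC_left)

lemma trep_tdiff: "trep t \<Longrightarrow> trep s \<Longrightarrow> trep (tdiff t s)"
  unfolding tdiff_def by (simp add: trep_tadd trep_tscale)

lemma tev_tdiff:
  "trep t \<Longrightarrow> trep s \<Longrightarrow> bounded_bilinear_form B \<Longrightarrow> tev B (tdiff t s) = tev B t - tev B s"
  unfolding tdiff_def by (simp add: tev_tadd trep_tscale tev_tscale)

lemma trep_tlact: "trep t \<Longrightarrow> trep (tlact a t)"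
  unfolding trep_def tlact_def
  by (rule summable_comparison_test[OF _ summable_mult[of _ "norm a"]])
    (auto intro!: mult_right_mono simp: norm_mult_ineq mult.assoc[symmetric])

lemma trep_tract:
  assumes "trep t"
  shows "trep (tract t a)"
proof -
  have bound: "norm (fst (t n)) * norm (snd (t n) * a) \<le> norm a * (norm (fst (t n)) * norm (snd (t n)))" for n
    using mult_left_mono[OF norm_mult_ineq[of "snd (t n)" a], of "norm (fst (t n))"]
    by (simp add: algebra_simps)
  have "summable (\<lambda>n. norm a * (norm (fst (t n)) * norm (snd (t n))))"
    using assms by (simp add: trep_def summable_mult)
  then show ?thesis
    unfolding trep_def tract_def by (rule summable_comparison_test[rotated]) (use bound in auto)
qed

lemma teq_refl: "teq t t"
  by (simp add: teq_def)

lemma pnorm_le_tnorm: "trep r \<Longrightarrow> teq r t \<Longrightarrow> pnorm t \<le> tnorm r"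
  unfolding pnorm_def tnorm_def
  by (rule cInf_lower) (auto intro!: bdd_belowI[of _ 0] tnorm_nonneg[unfolded tnorm_def])

lemma pnorm_nonneg: "trep t \<Longrightarrow> 0 \<le> pnorm t"
  unfolding pnorm_def by (rule cInf_greatest) (auto intro: teq_refl tnorm_nonneg[unfolded tnorm_def])

lemma pnorm_eq_0I:
  assumes "trep t" and "\<And>B. bounded_bilinear_form B \<Longrightarrow> tev B t = 0"
  shows "pnorm t = 0"
proof -
  let ?zero = "\<lambda>n::nat. (0::'a, 0::'a)"
  have "teq ?zero t" using assms(2) by (simp add: teq_def tev_def bounded_bilinear_form_zero_left)
  hence "pnorm t \<le> tnorm ?zero" by (rule pnorm_le_tnorm[rotated]) (simp add: trep_def)
  with pnorm_nonneg[OF assms(1)] show ?thesis by (simp add: tnorm_def)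
qed

lemma pnorm_le_mult_pnormI:
  assumes t: "trep t" and C: "0 \<le> C"
    and N: "\<And>r. trep r \<Longrightarrow> teq r t \<Longrightarrow> trep (N r) \<and> teq (N r) s \<and> tnorm (N r) \<le> C * tnorm r"
  shows "pnorm s \<le> C * pnorm t"
proof (cases "C = 0")
  case True
  then show ?thesis using N[OF t teq_refl] pnorm_le_tnorm[of "N t" s] by simp
next
  case False
  have "pnorm s / C \<le> pnorm t"
    unfolding pnorm_def[of t]
  proof (rule cInf_greatest)
    show "{\<Sum>n. norm (fst (r n)) * norm (snd (r n)) |r. trep r \<and> teq r t} \<noteq> {}"
      using t teq_refl by blast
  next
    fix x assume "x \<in> {\<Sum>n. norm (fst (r n)) * norm (snd (r n)) |r. trep r \<and> teq r t}"
    then obtain r where r: "x = tnorm r" "trep r" "teq r t" by (auto simp: tnorm_def)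
    have "pnorm s \<le> tnorm (N r)" using N[OF r(2,3)] pnorm_le_tnorm by blast
    also have "\<dots> \<le> C * x" using N[OF r(2,3)] r(1) by simp
    finally show "pnorm s / C \<le> x" using C False by (simp add: field_simps)
  qed
  then show ?thesis using C False by (simp add: field_simps)
qed

lemma pnorm_tscale_le:
  assumes "trep t"
  shows "pnorm (tscale c t) \<le> cmod c * pnorm t"
proof (rule pnorm_le_mult_pnormI[OF assms norm_ge_zero])
  fix r assume r: "trep r" "teq r t"
  then show "trep (tscale c r) \<and> teq (tscale c r) (tscale c t) \<and> tnorm (tscale c r) \<le> cmod c * tnorm r"
    using assms by (auto simp: trep_tscale tnorm_tscale teq_def tev_tscale)
qed

lemma pnorm_teq:
  assumes "teq t s"
  shows "pnorm t = pnorm s"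
proof -
  have "teq r t \<longleftrightarrow> teq r s" for r using assms by (simp add: teq_def)
  then show ?thesis by (simp add: pnorm_def)
qed

definition tsingle :: "'a::complex_banach_algebra \<Rightarrow> 'a \<Rightarrow> nat \<Rightarrow> 'a \<times> 'a" where
  "tsingle x y = (\<lambda>n. if n = 0 then (x, y) else (0, 0))"

lemma suminf_single_0: "(\<Sum>n. if n = 0 then c else (0::'b::real_normed_vector)) = c"
  using sums_single[of 0 "\<lambda>_. c"] by (simp add: sums_iff)

lemma trep_tsingle: "trep (tsingle x y)"
  unfolding trep_def tsingle_def
  using summable_single[of 0 "\<lambda>_. norm x * norm y"] by (simp add: if_distrib cong: if_cong)

lemma tnorm_tsingle: "tnorm (tsingle x y) = norm x * norm y"
  unfolding tnorm_def tsingle_def by (simp add: if_distrib suminf_single_0 cong: if_cong)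

lemma tev_tsingle: "bounded_bilinear_form B \<Longrightarrow> tev B (tsingle x y) = B x y"
  unfolding tev_def tsingle_def
  by (simp add: if_distrib bounded_bilinear_form_zero_left suminf_single_0 cong: if_cong)

lemma tpi_tsingle: "tpi (tsingle x y) = x * y"
  unfolding tpi_def tsingle_def by (simp add: if_distrib suminf_single_0 cong: if_cong)

lemma tlact_tsingle: "tlact a (tsingle x y) = tsingle (a * x) y"
  by (auto simp: tlact_def tsingle_def)

lemma tscale_tsingle: "tscale c (tsingle x y) = tsingle (scaleC c x) y"
  by (auto simp: tscale_def tsingle_def scaleC_zero_right)

section \<open>Approximate left \<open>\<phi>\<close>-diagonals\<close>

abbreviation tdefect :: "('a::complex_banach_algebra \<Rightarrow> complex) \<Rightarrow> 'a \<Rightarrow> (nat \<Rightarrow> 'a \<times> 'a) \<Rightarrow> (nat \<Rightarrow> 'a \<times> 'a)" where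
  "tdefect \<phi> a m \<equiv> tdiff (tlact a m) (tscale (\<phi> a) m)"

definition left_phi_approx_diagonal :: "('a::complex_banach_algebra \<Rightarrow> complex) \<Rightarrow> (nat \<Rightarrow> 'a \<times> 'a) filter \<Rightarrow> bool" where
  "left_phi_approx_diagonal \<phi> G \<longleftrightarrow> G \<noteq> bot \<and> eventually trep G \<and>
     (\<forall>a. ((\<lambda>m. pnorm (tdefect \<phi> a m)) \<longlongrightarrow> 0) G) \<and> ((\<lambda>m. \<phi> (tpi m)) \<longlongrightarrow> 1) G"

lemma bounded_linear_to_tensor_character_tscale:
  assumes ch: "is_character \<phi>" and m: "trep m"
  shows "bounded_linear_to_tensor (\<lambda>x. tscale (\<phi> x) m)"
  unfolding bounded_linear_to_tensor_def
proof (intro conjI allI exI)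
  fix x
  have "pnorm (tscale (\<phi> x) m) \<le> cmod (\<phi> x) * pnorm m" by (rule pnorm_tscale_le[OF m])
  also have "\<dots> \<le> pnorm m * norm x"
    using mult_right_mono[OF norm_character_le[OF ch] pnorm_nonneg[OF m]] by (simp add: mult.commute)
  finally show "pnorm (tscale (\<phi> x) m) \<le> pnorm m * norm x" .
qed (use m in \<open>auto simp: teq_def trep_tscale tev_tadd tev_tscale character_add[OF ch]
                           character_scaleC[OF ch] distrib_right\<close>)

lemma pnorm_tlact_character_tscale_le:
  assumes ch: "is_character \<phi>" and m: "trep m"
  shows "pnorm (tdiff (tlact a (tscale (\<phi> x) m)) (tscale (\<phi> (a * x)) m)) \<le> cmod (\<phi> x) * pnorm (tdefect \<phi> a m)"
proof -
  have "tlact a (tscale (\<phi> x) m) = tscale (\<phi> x) (tlact a m)"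
    by (simp add: tlact_def tscale_def mult_scaleC_right)
  then have "teq (tdiff (tlact a (tscale (\<phi> x) m)) (tscale (\<phi> (a * x)) m)) (tscale (\<phi> x) (tdefect \<phi> a m))"
    using m by (simp add: teq_def tev_tdiff tev_tscale trep_tscale trep_tlact trep_tdiff
        character_mult[OF ch] algebra_simps)
  then show ?thesis
    by (simp add: pnorm_teq pnorm_tscale_le trep_tdiff trep_tlact trep_tscale m)
qed

lemma pnorm_tscale_character_mult_eq_0:
  assumes ch: "is_character \<phi>" and m: "trep m"
  shows "pnorm (tdiff (tscale (\<phi> (x * a)) m) (tscale (\<phi> a) (tscale (\<phi> x) m))) = 0"
  using m by (intro pnorm_eq_0I) (simp_all add: tev_tdiff tev_tscale trep_tscale trep_tdiff character_mult[OF ch])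

lemma approx_left_phi_biprojective_if_diagonal:
  fixes \<phi> :: "'a::complex_banach_algebra \<Rightarrow> complex"
  assumes ch: "is_character \<phi>" and "left_phi_approx_diagonal \<phi> G"
  shows "approx_left_phi_biprojective \<phi>"
proof -
  from assms(2) have G: "G \<noteq> bot" and rep: "eventually trep G"
    and defect: "\<And>a. ((\<lambda>m. pnorm (tdefect \<phi> a m)) \<longlongrightarrow> 0) G"
    and unit: "((\<lambda>m. \<phi> (tpi m)) \<longlongrightarrow> 1) G"
    by (auto simp: left_phi_approx_diagonal_def)
  define R :: "(nat \<Rightarrow> 'a \<times> 'a) \<Rightarrow> 'a \<Rightarrow> nat \<Rightarrow> 'a \<times> 'a"
    where "R m = (\<lambda>x. tscale (\<phi> x) m)" for m
  have "eventually bounded_linear_to_tensor (filtermap R G)"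
    using rep unfolding eventually_filtermap R_def
    by (rule eventually_mono) (rule bounded_linear_to_tensor_character_tscale[OF ch])
  moreover have "((\<lambda>m. pnorm (tdiff (tlact a (R m x)) (R m (a * x)))) \<longlongrightarrow> 0) G" for a x
    unfolding R_def
    by (rule Lim_null_comparison[OF eventually_mono[OF rep] tendsto_mult_right_zero[OF defect[of a], where c="cmod (\<phi> x)"]])
      (simp add: pnorm_tlact_character_tscale_le[OF ch] pnorm_nonneg trep_tdiff trep_tlact trep_tscale)
  moreover have "((\<lambda>m. pnorm (tdiff (R m (x * a)) (tscale (\<phi> a) (R m x)))) \<longlongrightarrow> 0) G" for a x
    unfolding R_def
    by (rule tendsto_eventually[OF eventually_mono[OF rep]]) (simp add: pnorm_tscale_character_mult_eq_0[OF ch])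
  moreover have "((\<lambda>m. \<phi> (tpi (R m x)) - \<phi> x) \<longlongrightarrow> 0) G" for x
  proof -
    have e: "eventually (\<lambda>m. \<phi> x * \<phi> (tpi m) - \<phi> x = \<phi> (tpi (R m x)) - \<phi> x) G"
      using rep by (rule eventually_mono) (simp add: R_def tpi_tscale character_scaleC[OF ch])
    have "((\<lambda>m. \<phi> x * \<phi> (tpi m) - \<phi> x) \<longlongrightarrow> \<phi> x * 1 - \<phi> x) G"
      by (intro tendsto_intros unit)
    then show ?thesis unfolding tendsto_cong[OF e] by simp
  qed
  ultimately show ?thesis
    using G unfolding approx_left_phi_biprojective_def
    by (intro exI[of _ "filtermap R G"]) (simp add: filtermap_bot_iff filterlim_filtermap o_def)
qed

text \<open>The collapse \<open>a \<otimes> b \<mapsto> \<phi>(b) a \<otimes> w\<close> turns the commutator \<open>a\<cdot>m - m\<cdot>a\<close> into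
  \<open>a\<cdot>m' - \<phi>(a) m'\<close>, since \<open>m\<cdot>a\<close> is collapsed to \<open>\<phi>(a) m'\<close>.\<close>

definition tcollapse :: "('a::complex_banach_algebra \<Rightarrow> complex) \<Rightarrow> 'a \<Rightarrow> (nat \<Rightarrow> 'a \<times> 'a) \<Rightarrow> (nat \<Rightarrow> 'a \<times> 'a)" where
  "tcollapse \<phi> w r = (\<lambda>n. (scaleC (\<phi> (snd (r n))) (fst (r n)), w))"

definition collapse_form :: "('a::complex_banach_algebra \<Rightarrow> complex) \<Rightarrow> 'a \<Rightarrow> ('a \<Rightarrow> 'a \<Rightarrow> complex) \<Rightarrow> ('a \<Rightarrow> 'a \<Rightarrow> complex)" where
  "collapse_form \<phi> w B = (\<lambda>p q. \<phi> q * B p w)"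

lemma bounded_bilinear_form_collapse_form:
  assumes ch: "is_character \<phi>" and B: "bounded_bilinear_form B"
  shows "bounded_bilinear_form (collapse_form \<phi> w B)"
proof -
  obtain K where K: "\<And>a b. cmod (B a b) \<le> K * norm a * norm b"
    using bounded_bilinear_formD(3)[OF B] by blast
  have "\<exists>K'. \<forall>p q. cmod (\<phi> q * B p w) \<le> K' * norm p * norm q"
  proof (intro exI allI)
    fix p q
    have "cmod (B p w) \<le> \<bar>K\<bar> * norm p * norm w"
      using K[of p w] by (smt (verit) mult_right_mono norm_ge_zero zero_le_mult_iff)
    then have "cmod (\<phi> q) * cmod (B p w) \<le> norm q * (\<bar>K\<bar> * norm p * norm w)"
      by (intro mult_mono norm_character_le[OF ch]) auto
    then show "cmod (\<phi> q * B p w) \<le> (\<bar>K\<bar> * norm w) * norm p * norm q"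
      by (simp add: norm_mult algebra_simps)
  qed
  then show ?thesis
    using B unfolding bounded_bilinear_form_def collapse_form_def
    by (auto simp: character_add[OF ch] character_scaleC[OF ch] algebra_simps)
qed

lemma trep_tcollapse:
  assumes ch: "is_character \<phi>" and r: "trep r"
  shows "trep (tcollapse \<phi> w r)" and "tnorm (tcollapse \<phi> w r) \<le> norm w * tnorm r"
proof -
  have s: "summable (\<lambda>n. norm w * (norm (fst (r n)) * norm (snd (r n))))"
    using r by (simp add: trep_def summable_mult)
  have le: "norm (fst (tcollapse \<phi> w r n)) * norm (snd (tcollapse \<phi> w r n))
              \<le> norm w * (norm (fst (r n)) * norm (snd (r n)))" for n
    using mult_right_mono[OF norm_character_le[OF ch, of "snd (r n)"] norm_ge_zero[of "fst (r n)"]]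
    by (simp add: tcollapse_def norm_scaleC algebra_simps mult_left_mono)
  show rep: "trep (tcollapse \<phi> w r)"
    unfolding trep_def by (rule summable_comparison_test[OF _ s]) (use le in auto)
  show "tnorm (tcollapse \<phi> w r) \<le> norm w * tnorm r"
    unfolding tnorm_def suminf_mult[OF r[unfolded trep_def], symmetric]
    by (rule suminf_le[OF le rep[unfolded trep_def] s])
qed

lemma tev_tcollapse: "bounded_bilinear_form B \<Longrightarrow> tev B (tcollapse \<phi> w r) = tev (collapse_form \<phi> w B) r"
  unfolding tev_def tcollapse_def collapse_form_def by (simp add: bounded_bilinear_formD(2))

lemma tev_tlact_tcollapse:
  "bounded_bilinear_form B \<Longrightarrow> tev B (tlact a (tcollapse \<phi> w r)) = tev (collapse_form \<phi> w B) (tlact a r)"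
  unfolding tev_def tcollapse_def collapse_form_def tlact_def
  by (simp add: bounded_bilinear_formD(2) mult_scaleC_right)

lemma tev_collapse_form_tract:
  assumes ch: "is_character \<phi>" and B: "bounded_bilinear_form B" and r: "trep r"
  shows "tev (collapse_form \<phi> w B) (tract r a) = \<phi> a * tev (collapse_form \<phi> w B) r"
  using suminf_mult[OF summable_tev[OF r bounded_bilinear_form_collapse_form[OF ch B]], of "\<phi> a"]
  unfolding tev_def tract_def collapse_form_def by (simp add: character_mult[OF ch] algebra_simps)

lemma pnorm_tdefect_tcollapse_le:
  assumes ch: "is_character \<phi>" and m: "trep m"
  shows "pnorm (tdefect \<phi> a (tcollapse \<phi> w m)) \<le> norm w * pnorm (tdiff (tlact a m) (tract m a))"
proof (rule pnorm_le_mult_pnormI[where N="tcollapse \<phi> w"])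
  show "trep (tdiff (tlact a m) (tract m a))" by (intro trep_tdiff trep_tlact trep_tract m)
next
  fix r assume r: "trep r" "teq r (tdiff (tlact a m) (tract m a))"
  have cm: "trep (tcollapse \<phi> w m)" by (rule trep_tcollapse(1)[OF ch m])
  have "tev B (tcollapse \<phi> w r) = tev B (tdefect \<phi> a (tcollapse \<phi> w m))"
    if B: "bounded_bilinear_form B" for B
  proof -
    have B': "bounded_bilinear_form (collapse_form \<phi> w B)"
      by (rule bounded_bilinear_form_collapse_form[OF ch B])
    have "tev B (tcollapse \<phi> w r) = tev (collapse_form \<phi> w B) (tdiff (tlact a m) (tract m a))"
      using r(2) B' by (simp add: tev_tcollapse[OF B] teq_def)
    also have "\<dots> = tev B (tlact a (tcollapse \<phi> w m)) - \<phi> a * tev B (tcollapse \<phi> w m)"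
      by (simp add: tev_tdiff[OF trep_tlact[OF m] trep_tract[OF m] B'] tev_tlact_tcollapse[OF B]
          tev_tcollapse[OF B] tev_collapse_form_tract[OF ch B m])
    also have "\<dots> = tev B (tdefect \<phi> a (tcollapse \<phi> w m))"
      by (simp add: tev_tdiff[OF trep_tlact[OF cm] trep_tscale[OF cm] B] tev_tscale[OF cm B])
    finally show ?thesis .
  qed
  then show "trep (tcollapse \<phi> w r) \<and> teq (tcollapse \<phi> w r) (tdefect \<phi> a (tcollapse \<phi> w m))
      \<and> tnorm (tcollapse \<phi> w r) \<le> norm w * tnorm r"
    using trep_tcollapse[OF ch r(1)] by (simp add: teq_def)
qed simp

lemma character_tpi_tcollapse:
  assumes ch: "is_character \<phi>" and m: "trep m" and w: "\<phi> w = 1"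
  shows "\<phi> (tpi (tcollapse \<phi> w m)) = \<phi> (tpi m)"
  unfolding tpi_def
    character_suminf[OF ch summable_tpi[OF trep_tcollapse(1)[OF ch m]]]
    character_suminf[OF ch summable_tpi[OF m]]
  by (simp add: tcollapse_def character_mult[OF ch] character_scaleC[OF ch] w mult.commute)

lemma pseudo_amenable_left_phi_approx_diagonal:
  fixes \<phi> :: "'a::complex_banach_algebra \<Rightarrow> complex"
  assumes ch: "is_character \<phi>" and "pseudo_amenable TYPE('a)"
  obtains G where "left_phi_approx_diagonal \<phi> G"
proof -
  obtain F :: "(nat \<Rightarrow> 'a \<times> 'a) filter" where F: "F \<noteq> bot" and rep: "eventually trep F"
    and comm: "\<And>a. ((\<lambda>m. pnorm (tdiff (tlact a m) (tract m a))) \<longlongrightarrow> 0) F"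
    and unit: "\<And>a. ((\<lambda>m. tpi m * a) \<longlongrightarrow> a) F"
    using assms(2) unfolding pseudo_amenable_def by blast
  obtain w where w: "\<phi> w = 1" using character_obtain_unit[OF ch] by blast
  obtain a0 where a0: "\<phi> a0 \<noteq> 0" using ch unfolding is_character_def by blast
  have "((\<lambda>m. pnorm (tdefect \<phi> a (tcollapse \<phi> w m))) \<longlongrightarrow> 0) F" for a
  proof (rule Lim_null_comparison)
    show "eventually (\<lambda>m. norm (pnorm (tdefect \<phi> a (tcollapse \<phi> w m)))
                          \<le> norm w * pnorm (tdiff (tlact a m) (tract m a))) F"
      using rep by (rule eventually_mono)
        (simp add: pnorm_tdefect_tcollapse_le[OF ch] pnorm_nonneg trep_tdiff trep_tlact
           trep_tscale trep_tcollapse(1)[OF ch])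
    show "((\<lambda>m. norm w * pnorm (tdiff (tlact a m) (tract m a))) \<longlongrightarrow> 0) F"
      by (rule tendsto_mult_right_zero[OF comm])
  qed
  moreover have "((\<lambda>m. \<phi> (tpi (tcollapse \<phi> w m))) \<longlongrightarrow> 1) F"
  proof -
    have "((\<lambda>m. \<phi> (tpi m * a0)) \<longlongrightarrow> \<phi> a0) F"
      by (rule bounded_linear.tendsto[OF bounded_linear_character[OF ch] unit])
    then have "((\<lambda>m. \<phi> (tpi m) * \<phi> a0 / \<phi> a0) \<longlongrightarrow> \<phi> a0 / \<phi> a0) F"
      by (intro tendsto_divide tendsto_const) (simp_all add: character_mult[OF ch] a0)
    then have "((\<lambda>m. \<phi> (tpi m)) \<longlongrightarrow> 1) F" using a0 by simp
    moreover have "eventually (\<lambda>m. \<phi> (tpi m) = \<phi> (tpi (tcollapse \<phi> w m))) F"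
      using rep by (rule eventually_mono) (simp add: character_tpi_tcollapse[OF ch _ w])
    ultimately show ?thesis by (simp add: tendsto_cong)
  qed
  ultimately have "left_phi_approx_diagonal \<phi> (filtermap (tcollapse \<phi> w) F)"
    using F rep unfolding left_phi_approx_diagonal_def
    by (simp add: filtermap_bot_iff eventually_filtermap filterlim_filtermap o_def
        eventually_mono[OF _ trep_tcollapse(1)[OF ch]])
  then show ?thesis by (rule that)
qed

section \<open>Hahn--Banach\<close>

definition sublinear :: "('v::real_vector \<Rightarrow> real) \<Rightarrow> bool" where
  "sublinear p \<longleftrightarrow> (\<forall>x y. p (x + y) \<le> p x + p y) \<and> (\<forall>c x. 0 \<le> c \<longrightarrow> p (c *\<^sub>R x) = c * p x)"

lemma sublinearD:
  assumes "sublinear p"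
  shows "p (x + y) \<le> p x + p y" and "0 \<le> c \<Longrightarrow> p (c *\<^sub>R x) = c * p x"
  using assms by (simp_all add: sublinear_def)

text \<open>Partial linear functionals below \<open>p\<close>, represented by their graphs so that Zorn's lemma
  applies to the inclusion order.\<close>

definition linear_graph_below :: "('v::real_vector \<Rightarrow> real) \<Rightarrow> ('v \<times> real) set \<Rightarrow> bool" where
  "linear_graph_below p G \<longleftrightarrow>
     (\<forall>x a b. (x, a) \<in> G \<longrightarrow> (x, b) \<in> G \<longrightarrow> a = b) \<and>
     (\<forall>x a y b. (x, a) \<in> G \<longrightarrow> (y, b) \<in> G \<longrightarrow> (x + y, a + b) \<in> G) \<and>
     (\<forall>x a c. (x, a) \<in> G \<longrightarrow> (c *\<^sub>R x, c * a) \<in> G) \<and>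
     (\<forall>x a. (x, a) \<in> G \<longrightarrow> a \<le> p x)"

lemma linear_graph_belowD:
  assumes "linear_graph_below p G"
  shows "(x, a) \<in> G \<Longrightarrow> (x, b) \<in> G \<Longrightarrow> a = b"
    and "(x, a) \<in> G \<Longrightarrow> (y, b) \<in> G \<Longrightarrow> (x + y, a + b) \<in> G"
    and "(x, a) \<in> G \<Longrightarrow> (c *\<^sub>R x, c * a) \<in> G"
    and "(x, a) \<in> G \<Longrightarrow> a \<le> p x"
  using assms unfolding linear_graph_below_def by blast+

lemma linear_graph_below_diff:
  assumes "linear_graph_below p G" "(x, a) \<in> G" "(y, b) \<in> G"
  shows "(y - x, b - a) \<in> G"
  using linear_graph_belowD(2)[OF assms(1) assms(3) linear_graph_belowD(3)[OF assms(1,2), of "-1"]]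
  by simp

lemma linear_graph_below_Union:
  assumes "C \<in> chains {G. linear_graph_below p G}"
  shows "linear_graph_below p (\<Union>C)"
proof -
  have graphs: "linear_graph_below p X" if "X \<in> C" for X
    using chainsD2[OF assms] that by blast
  have common: "\<exists>X\<in>C. q1 \<in> X \<and> q2 \<in> X" if "q1 \<in> \<Union>C" "q2 \<in> \<Union>C" for q1 q2
    using that chainsD[OF assms] by blast
  show ?thesis
    unfolding linear_graph_below_def
  proof (intro conjI allI impI)
    fix x a b assume "(x, a) \<in> \<Union>C" "(x, b) \<in> \<Union>C"
    then show "a = b" using common graphs linear_graph_belowD(1) by metis
  next
    fix x a y b assume "(x, a) \<in> \<Union>C" "(y, b) \<in> \<Union>C"
    then show "(x + y, a + b) \<in> \<Union>C" using common graphs linear_graph_belowD(2) by (metis UnionI)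
  qed (use graphs linear_graph_belowD(3,4) in blast)+
qed

text \<open>The one-step extension: the value \<open>c\<close> at the new point \<open>x\<^sub>0\<close> must satisfy
  \<open>b - p (y - x\<^sub>0) \<le> c \<le> p (x + x\<^sub>0) - a\<close> on the graph, which is possible by subadditivity.\<close>

lemma linear_graph_below_extension_value:
  assumes p: "sublinear p" and G: "linear_graph_below p G" "(0, 0) \<in> G"
  obtains c where "\<And>y b. (y, b) \<in> G \<Longrightarrow> b - p (y - x\<^sub>0) \<le> c"
    and "\<And>x a. (x, a) \<in> G \<Longrightarrow> c \<le> p (x + x\<^sub>0) - a"
proof -
  define L where "L = {b - p (y - x\<^sub>0) | y b. (y, b) \<in> G}"
  have key: "b - p (y - x\<^sub>0) \<le> p (x + x\<^sub>0) - a" if "(x, a) \<in> G" "(y, b) \<in> G" for x a y b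
  proof -
    have "a + b \<le> p ((x + x\<^sub>0) + (y - x\<^sub>0))"
      using linear_graph_belowD(4)[OF G(1) linear_graph_belowD(2)[OF G(1) that]] by simp
    also have "\<dots> \<le> p (x + x\<^sub>0) + p (y - x\<^sub>0)" by (rule sublinearD(1)[OF p])
    finally show ?thesis by simp
  qed
  have "L \<noteq> {}" "bdd_above L" unfolding L_def bdd_above_def using G(2) key[OF G(2)] by blast+
  then show ?thesis
    by (intro that[of "Sup L"] cSup_upper cSup_least) (auto simp: L_def key)
qed

lemma extension_value_bound:
  assumes p: "sublinear p" and G: "linear_graph_below p G" and xa: "(x, a) \<in> G"
    and c_ge: "\<And>y b. (y, b) \<in> G \<Longrightarrow> b - p (y - x\<^sub>0) \<le> c"
    and c_le: "\<And>x a. (x, a) \<in> G \<Longrightarrow> c \<le> p (x + x\<^sub>0) - a"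
  shows "a + t * c \<le> p (x + t *\<^sub>R x\<^sub>0)"
proof (cases t "0::real" rule: linorder_cases)
  case equal
  then show ?thesis using linear_graph_belowD(4)[OF G xa] by simp
next
  case greater
  have "c \<le> p ((1/t) *\<^sub>R x + x\<^sub>0) - (1/t) * a"
    by (rule c_le[OF linear_graph_belowD(3)[OF G xa]])
  then have "t * c \<le> t * p ((1/t) *\<^sub>R x + x\<^sub>0) - a"
    using greater by (simp add: field_simps)
  also have "t * p ((1/t) *\<^sub>R x + x\<^sub>0) = p (t *\<^sub>R ((1/t) *\<^sub>R x + x\<^sub>0))"
    using sublinearD(2)[OF p, of t] greater by simp
  also have "t *\<^sub>R ((1/t) *\<^sub>R x + x\<^sub>0) = x + t *\<^sub>R x\<^sub>0"
    using greater by (simp add: scaleR_add_right)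
  finally show ?thesis by simp
next
  case less
  have "(-1/t) * a - p ((-1/t) *\<^sub>R x - x\<^sub>0) \<le> c"
    by (rule c_ge[OF linear_graph_belowD(3)[OF G xa]])
  then have "a - (-t) * p ((-1/t) *\<^sub>R x - x\<^sub>0) \<le> (-t) * c"
    using less by (simp add: field_simps)
  also have "(-t) * p ((-1/t) *\<^sub>R x - x\<^sub>0) = p ((-t) *\<^sub>R ((-1/t) *\<^sub>R x - x\<^sub>0))"
    using sublinearD(2)[OF p, of "-t"] less by simp
  also have "(-t) *\<^sub>R ((-1/t) *\<^sub>R x - x\<^sub>0) = x + t *\<^sub>R x\<^sub>0"
    using less by (simp add: scaleR_diff_right)
  finally show ?thesis by simp
qed

lemma linear_graph_below_line_unique:
  assumes G: "linear_graph_below p G" and x\<^sub>0: "x\<^sub>0 \<notin> fst ` G"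
    and "(x, a) \<in> G" "(y, b) \<in> G" "x + t *\<^sub>R x\<^sub>0 = y + s *\<^sub>R x\<^sub>0"
  shows "t = s"
proof (rule ccontr)
  assume "t \<noteq> s"
  have "((1/(t - s)) *\<^sub>R (y - x), (1/(t - s)) * (b - a)) \<in> G"
    by (rule linear_graph_belowD(3)[OF G linear_graph_below_diff[OF G assms(3,4)]])
  moreover have "y - x = (t - s) *\<^sub>R x\<^sub>0" using assms(5) by (simp add: algebra_simps)
  then have "(1/(t - s)) *\<^sub>R (y - x) = x\<^sub>0" using \<open>t \<noteq> s\<close> by simp
  ultimately show False using x\<^sub>0 by force
qed

lemma linear_graph_below_extend:
  assumes p: "sublinear p" and G: "linear_graph_below p G" "(0, 0) \<in> G" and x\<^sub>0: "x\<^sub>0 \<notin> fst ` G"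
  obtains G' where "linear_graph_below p G'" "G \<subseteq> G'" "x\<^sub>0 \<in> fst ` G'"
proof -
  obtain c where c_ge: "\<And>y b. (y, b) \<in> G \<Longrightarrow> b - p (y - x\<^sub>0) \<le> c"
    and c_le: "\<And>x a. (x, a) \<in> G \<Longrightarrow> c \<le> p (x + x\<^sub>0) - a"
    using linear_graph_below_extension_value[OF p G] by blast
  define G' where "G' = {(x + t *\<^sub>R x\<^sub>0, a + t * c) | x a t. (x, a) \<in> G}"
  have "linear_graph_below p G'"
    unfolding linear_graph_below_def
  proof (intro conjI allI impI)
    fix z a' b' assume "(z, a') \<in> G'" "(z, b') \<in> G'"
    then obtain x a t y b s where xa: "(x, a) \<in> G" "z = x + t *\<^sub>R x\<^sub>0" "a' = a + t * c"
      and yb: "(y, b) \<in> G" "z = y + s *\<^sub>R x\<^sub>0" "b' = b + s * c"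
      unfolding G'_def by blast
    have "t = s" using linear_graph_below_line_unique[OF G(1) x\<^sub>0 xa(1) yb(1)] xa(2) yb(2) by simp
    then have "a = b" using linear_graph_belowD(1)[OF G(1) xa(1)] yb(1) xa(2) yb(2) by simp
    then show "a' = b'" using xa(3) yb(3) \<open>t = s\<close> by simp
  next
    fix z a' w b' assume "(z, a') \<in> G'" "(w, b') \<in> G'"
    then obtain x a t y b s where xa: "(x, a) \<in> G" "z = x + t *\<^sub>R x\<^sub>0" "a' = a + t * c"
      and yb: "(y, b) \<in> G" "w = y + s *\<^sub>R x\<^sub>0" "b' = b + s * c"
      unfolding G'_def by blast
    have "(x + y, a + b) \<in> G" by (rule linear_graph_belowD(2)[OF G(1) xa(1) yb(1)])
    moreover have "z + w = (x + y) + (t + s) *\<^sub>R x\<^sub>0" "a' + b' = (a + b) + (t + s) * c"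
      using xa yb by (simp_all add: algebra_simps)
    ultimately show "(z + w, a' + b') \<in> G'" unfolding G'_def by blast
  next
    fix z a' r assume "(z, a') \<in> G'"
    then obtain x a t where xa: "(x, a) \<in> G" "z = x + t *\<^sub>R x\<^sub>0" "a' = a + t * c"
      unfolding G'_def by blast
    have "(r *\<^sub>R x, r * a) \<in> G" by (rule linear_graph_belowD(3)[OF G(1) xa(1)])
    moreover have "r *\<^sub>R z = r *\<^sub>R x + (r * t) *\<^sub>R x\<^sub>0" "r * a' = r * a + (r * t) * c"
      using xa by (simp_all add: algebra_simps)
    ultimately show "(r *\<^sub>R z, r * a') \<in> G'" unfolding G'_def by blast
  next
    fix z a' assume "(z, a') \<in> G'"
    then obtain x a t where "(x, a) \<in> G" "z = x + t *\<^sub>R x\<^sub>0" "a' = a + t * c"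
      unfolding G'_def by blast
    then show "a' \<le> p z" using extension_value_bound[OF p G(1) _ c_ge c_le] by blast
  qed
  moreover have "(x + 0 *\<^sub>R x\<^sub>0, a + 0 * c) \<in> G'" if "(x, a) \<in> G" for x a
    using that unfolding G'_def by blast
  then have "G \<subseteq> G'" by auto
  moreover have "(0 + 1 *\<^sub>R x\<^sub>0, 0 + 1 * c) \<in> G'" unfolding G'_def using G(2) by blast
  then have "x\<^sub>0 \<in> fst ` G'" by force
  ultimately show ?thesis by (rule that)
qed

lemma linear_graph_below_maximal:
  assumes S: "subspace S"
    and f_add: "\<And>x y. x \<in> S \<Longrightarrow> y \<in> S \<Longrightarrow> f (x + y) = f x + f y"
    and f_scale: "\<And>c x. x \<in> S \<Longrightarrow> f (c *\<^sub>R x) = c * f x"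
    and f_le: "\<And>x. x \<in> S \<Longrightarrow> f x \<le> p x"
  obtains M where "linear_graph_below p M" "\<And>x. x \<in> S \<Longrightarrow> (x, f x) \<in> M"
    and "\<And>G. linear_graph_below p G \<Longrightarrow> M \<subseteq> G \<Longrightarrow> G = M"
proof -
  define A where "A = {G. linear_graph_below p G \<and> (\<forall>x\<in>S. (x, f x) \<in> G)}"
  have "(\<lambda>x. (x, f x)) ` S \<in> A"
    using subspace_add[OF S] subspace_scale[OF S] f_add f_scale f_le
    unfolding A_def linear_graph_below_def by auto
  have "\<exists>U\<in>A. \<forall>X\<in>C. X \<subseteq> U" if C: "C \<in> chains A" for C
  proof (cases "C = {}")
    case True
    then show ?thesis using \<open>(\<lambda>x. (x, f x)) ` S \<in> A\<close> by blast
  next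
    case False
    have "C \<in> chains {G. linear_graph_below p G}"
      using C by (auto simp: chains_def A_def)
    then have "linear_graph_below p (\<Union>C)" by (rule linear_graph_below_Union)
    moreover have "(x, f x) \<in> \<Union>C" if "x \<in> S" for x
      using False chainsD2[OF C] that unfolding A_def by blast
    ultimately show ?thesis unfolding A_def by blast
  qed
  then have "\<exists>M\<in>A. \<forall>X\<in>A. M \<subseteq> X \<longrightarrow> X = M"
    by (intro Zorn_Lemma2 ballI)
  then obtain M where "M \<in> A" and "\<And>X. X \<in> A \<Longrightarrow> M \<subseteq> X \<Longrightarrow> X = M"
    by blast
  then show ?thesis by (intro that) (auto simp: A_def)
qed

lemma linear_graph_below_function:
  assumes M: "linear_graph_below p M" and total: "\<And>x. x \<in> fst ` M"
  obtains g where "linear g" "\<And>x. (x, g x) \<in> M"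
proof -
  define g where "g x = (THE a. (x, a) \<in> M)" for x
  have g_eq: "g x = a" if "(x, a) \<in> M" for x a
    unfolding g_def
    by (rule the_equality[where P="\<lambda>a. (x, a) \<in> M", OF that]) (use that linear_graph_belowD(1)[OF M] in blast)
  have graph_g: "(x, g x) \<in> M" for x
  proof -
    obtain a where "(x, a) \<in> M" using total[of x] by force
    then show ?thesis using g_eq by simp
  qed
  have "linear g"
  proof (rule linearI)
    show "g (x + y) = g x + g y" for x y
      by (rule g_eq, rule linear_graph_belowD(2)[OF M graph_g graph_g])
    show "g (r *\<^sub>R x) = r *\<^sub>R g x" for r x
      unfolding real_scaleR_def by (rule g_eq, rule linear_graph_belowD(3)[OF M graph_g])
  qed
  then show ?thesis using that graph_g by blast
qed

theorem hahn_banach: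
  fixes p :: "'v::real_vector \<Rightarrow> real"
  assumes p: "sublinear p" and S: "subspace S"
    and f_add: "\<And>x y. x \<in> S \<Longrightarrow> y \<in> S \<Longrightarrow> f (x + y) = f x + f y"
    and f_scale: "\<And>c x. x \<in> S \<Longrightarrow> f (c *\<^sub>R x) = c * f x"
    and f_le: "\<And>x. x \<in> S \<Longrightarrow> f x \<le> p x"
  obtains g where "linear g" "\<And>x. g x \<le> p x" "\<And>x. x \<in> S \<Longrightarrow> g x = f x"
proof -
  obtain M where M: "linear_graph_below p M" and M_ext: "\<And>x. x \<in> S \<Longrightarrow> (x, f x) \<in> M"
    and M_max: "\<And>G. linear_graph_below p G \<Longrightarrow> M \<subseteq> G \<Longrightarrow> G = M"
    using linear_graph_below_maximal[OF S f_add f_scale f_le] by blast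
  have "(0, 0) \<in> M"
    using linear_graph_belowD(3)[OF M M_ext[OF subspace_0[OF S]], of 0] by simp
  have "x \<in> fst ` M" for x
  proof (rule ccontr)
    assume "x \<notin> fst ` M"
    then obtain G' where "linear_graph_below p G'" "M \<subseteq> G'" "x \<in> fst ` G'"
      using linear_graph_below_extend[OF p M \<open>(0, 0) \<in> M\<close>] by blast
    with M_max \<open>x \<notin> fst ` M\<close> show False by blast
  qed
  then obtain g where "linear g" and graph_g: "\<And>x. (x, g x) \<in> M"
    using linear_graph_below_function[OF M] by blast
  moreover have "g x = f x" if "x \<in> S" for x
    using linear_graph_belowD(1)[OF M graph_g M_ext[OF that]] .
  ultimately show ?thesis using that linear_graph_belowD(4)[OF M graph_g] by blast
qed

lemma subspace_add_line:
  assumes M: "subspace M"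
  shows "subspace {m + t *\<^sub>R y | m t. m \<in> M}"
  unfolding subspace_def
proof (intro conjI ballI allI)
  show "0 \<in> {m + t *\<^sub>R y | m t. m \<in> M}"
    using subspace_0[OF M] by (metis (mono_tags, lifting) add_0 mem_Collect_eq scaleR_zero_left)
next
  fix x z assume "x \<in> {m + t *\<^sub>R y | m t. m \<in> M}" "z \<in> {m + t *\<^sub>R y | m t. m \<in> M}"
  then obtain m t m' t' where "m \<in> M" "x = m + t *\<^sub>R y" "m' \<in> M" "z = m' + t' *\<^sub>R y"
    by blast
  then have "m + m' \<in> M" "x + z = (m + m') + (t + t') *\<^sub>R y"
    using subspace_add[OF M] by (auto simp: algebra_simps)
  then show "x + z \<in> {m + t *\<^sub>R y | m t. m \<in> M}" by blast
next
  fix c x assume "x \<in> {m + t *\<^sub>R y | m t. m \<in> M}"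
  then obtain m t where "m \<in> M" "x = m + t *\<^sub>R y" by blast
  then have "c *\<^sub>R m \<in> M" "c *\<^sub>R x = c *\<^sub>R m + (c * t) *\<^sub>R y"
    using subspace_scale[OF M] by (auto simp: algebra_simps)
  then show "c *\<^sub>R x \<in> {m + t *\<^sub>R y | m t. m \<in> M}" by blast
qed

lemma line_coefficient_unique:
  assumes M: "subspace M" and y: "y \<notin> M" and "m \<in> M" "m' \<in> M" "m + t *\<^sub>R y = m' + t' *\<^sub>R y"
  shows "t = t'"
proof (rule ccontr)
  assume "t \<noteq> t'"
  have "y = (1 / (t - t')) *\<^sub>R ((t - t') *\<^sub>R y)" using \<open>t \<noteq> t'\<close> by simp
  also have "(t - t') *\<^sub>R y = m' - m" using assms(5) by (simp add: algebra_simps)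
  finally have "y \<in> M" using M assms(3,4) by (simp add: subspace_diff subspace_scale)
  with y show False by contradiction
qed

text \<open>The functional is \<open>m + t y \<mapsto> t \<epsilon>\<close> on \<open>M + \<real> y\<close>, extended by Hahn--Banach; domination
  for \<open>t > 0\<close> is the hypothesis \<open>\<epsilon> \<le> p (y + m / t)\<close>.\<close>

lemma hahn_banach_separation:
  fixes p :: "'v::real_vector \<Rightarrow> real"
  assumes p: "sublinear p" and p_nonneg: "\<And>x. 0 \<le> p x" and M: "subspace M"
    and far: "\<And>m. m \<in> M \<Longrightarrow> \<epsilon> \<le> p (y + m)" and \<epsilon>: "0 < \<epsilon>"
  obtains g where "linear g" "\<And>x. g x \<le> p x" "\<And>m. m \<in> M \<Longrightarrow> g m = 0" "g y = \<epsilon>"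
proof -
  have "y \<notin> M"
  proof
    assume "y \<in> M"
    then have "\<epsilon> \<le> p 0" using far[of "- y"] M by (simp add: subspace_neg)
    then show False using sublinearD(2)[OF p, of 0 0] \<epsilon> by simp
  qed
  define S where "S = {m + t *\<^sub>R y | m t. m \<in> M}"
  define f where "f z = \<epsilon> * (THE t. \<exists>m\<in>M. z = m + t *\<^sub>R y)" for z
  have f_eq: "f (m + t *\<^sub>R y) = \<epsilon> * t" if "m \<in> M" for m t
    unfolding f_def
    by (rule arg_cong[where f="(*) \<epsilon>"], rule the_equality)
      (use that line_coefficient_unique[OF M \<open>y \<notin> M\<close>] in auto)
  have "f x \<le> p x" if "x \<in> S" for x
  proof -
    obtain m t where m: "m \<in> M" and x: "x = m + t *\<^sub>R y" using \<open>x \<in> S\<close> S_def by blast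
    show ?thesis
    proof (cases "t > 0")
      case True
      have "t * \<epsilon> \<le> t * p (y + (1/t) *\<^sub>R m)"
        using far[OF subspace_scale[OF M m]] True by simp
      also have "\<dots> = p (t *\<^sub>R (y + (1/t) *\<^sub>R m))" using sublinearD(2)[OF p] True by simp
      also have "t *\<^sub>R (y + (1/t) *\<^sub>R m) = x" using True x by (simp add: scaleR_add_right)
      finally show ?thesis using f_eq[OF m] x by (simp add: mult.commute)
    next
      case False
      then have "\<epsilon> * t \<le> 0" using \<epsilon> by (simp add: mult_nonneg_nonpos)
      then show ?thesis using f_eq[OF m] x p_nonneg[of x] by simp
    qed
  qed
  moreover have "f (x + z) = f x + f z" "f (c *\<^sub>R x) = c * f x" if xz: "x \<in> S" "z \<in> S" for x z c
  proof -
    obtain m t m' t' where m: "m \<in> M" "x = m + t *\<^sub>R y" and m': "m' \<in> M" "z = m' + t' *\<^sub>R y"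
      using xz S_def by blast
    have "x + z = (m + m') + (t + t') *\<^sub>R y" "c *\<^sub>R x = c *\<^sub>R m + (c * t) *\<^sub>R y"
      using m m' by (simp_all add: algebra_simps)
    then have "f (x + z) = \<epsilon> * (t + t')" "f (c *\<^sub>R x) = \<epsilon> * (c * t)"
      using f_eq[OF subspace_add[OF M m(1) m'(1)]] f_eq[OF subspace_scale[OF M m(1)]] by simp_all
    moreover have "f x = \<epsilon> * t" "f z = \<epsilon> * t'" using f_eq m m' by simp_all
    ultimately show "f (x + z) = f x + f z" "f (c *\<^sub>R x) = c * f x" by (simp_all add: algebra_simps)
  qed
  moreover have "subspace S" unfolding S_def by (rule subspace_add_line[OF M])
  ultimately obtain g where g: "linear g" "\<And>x. g x \<le> p x" "\<And>x. x \<in> S \<Longrightarrow> g x = f x"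
    using hahn_banach[OF p, of S f] by blast
  have g_line: "g (m + t *\<^sub>R y) = \<epsilon> * t" if "m \<in> M" for m t
  proof -
    have "m + t *\<^sub>R y \<in> S" using that unfolding S_def by blast
    then show ?thesis using g(3) f_eq[OF that] by simp
  qed
  have "g m = 0" if "m \<in> M" for m using g_line[OF that, of 0] by simp
  moreover have "g y = \<epsilon>" using g_line[OF subspace_0[OF M], of 1] by simp
  ultimately show ?thesis using that g(1,2) by blast
qed

instantiation "fun" :: (type, real_vector) real_vector
begin

definition scaleR_fun :: "real \<Rightarrow> ('a \<Rightarrow> 'b) \<Rightarrow> 'a \<Rightarrow> 'b" where
  "scaleR_fun c f = (\<lambda>x. c *\<^sub>R f x)"

instance by standard (auto simp: scaleR_fun_def fun_eq_iff algebra_simps)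

end

lemma sum_fun_apply: "(\<Sum>j\<in>A. f j) x = (\<Sum>j\<in>A. f j x)"
  by (induction A rule: infinite_finite_induct) auto

lemma scaleR_fun_apply [simp]: "(c *\<^sub>R f) x = c *\<^sub>R f x"
  by (simp add: scaleR_fun_def)

definition point_fun :: "'i \<Rightarrow> 'a::zero \<Rightarrow> 'i \<Rightarrow> 'a" where
  "point_fun i k = (\<lambda>j. if j = i then k else 0)"

lemma linear_point_fun: "linear (point_fun i :: 'a::real_vector \<Rightarrow> 'i \<Rightarrow> 'a)"
  by (rule linearI) (auto simp: point_fun_def fun_eq_iff)

lemma sum_point_fun: "finite S \<Longrightarrow> (\<Sum>i\<in>S. point_fun i (h i)) = (\<lambda>j. if j \<in> S then h j else 0)"
  by (auto simp: fun_eq_iff sum_fun_apply point_fun_def)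

text \<open>Complexification of a real-linear functional, scaled by \<open>1/2\<close> so that it is bounded by
  the same constant.\<close>

definition complexify :: "('a::complex_banach_algebra \<Rightarrow> real) \<Rightarrow> 'a \<Rightarrow> complex" where
  "complexify g k = (of_real (g k) - \<i> * of_real (g (scaleC \<i> k))) / 2"

lemma Re_complexify: "Re (complexify g k) = g k / 2"
  by (simp add: complexify_def)

lemma complexify_add: "linear g \<Longrightarrow> complexify g (k + l) = complexify g k + complexify g l"
  by (simp add: complexify_def scaleC_add_right linear_add field_simps)

lemma complexify_scaleC:
  assumes g: "linear g"
  shows "complexify g (scaleC c k) = c * complexify g k"
proof -
  have "g (scaleC c k) = Re c * g k + Im c * g (scaleC \<i> k)"
    by (subst scaleC_Re_Im) (simp add: linear_add[OF g] linear_scale[OF g])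
  moreover have "scaleC \<i> (scaleC c k) = Re c *\<^sub>R scaleC \<i> k + (- Im c) *\<^sub>R k"
    using scaleC_Re_Im[of c "scaleC \<i> k"]
    by (simp add: scaleC_scaleC mult.commute scaleC_of_real[symmetric])
  then have "g (scaleC \<i> (scaleC c k)) = - Im c * g k + Re c * g (scaleC \<i> k)"
    by (simp add: linear_diff[OF g] linear_scale[OF g])
  ultimately show ?thesis
    by (simp add: complexify_def complex_eq_iff algebra_simps)
qed

lemma norm_complexify_le:
  assumes "\<And>k. \<bar>g k\<bar> \<le> norm k"
  shows "cmod (complexify g k) \<le> norm k"
proof -
  have "cmod (complexify g k) \<le> (\<bar>g k\<bar> + \<bar>g (scaleC \<i> k)\<bar>) / 2"
    using norm_triangle_ineq4[of "complex_of_real (g k)" "\<i> * complex_of_real (g (scaleC \<i> k))"]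
    by (simp add: complexify_def norm_mult norm_divide)
  also have "\<dots> \<le> (norm k + norm (scaleC \<i> k)) / 2"
    by (intro divide_right_mono add_mono assms) simp
  finally show ?thesis by (simp add: norm_scaleC)
qed

definition defect_vector :: "('a::complex_banach_algebra \<Rightarrow> complex) \<Rightarrow> 'a set \<Rightarrow> 'a \<Rightarrow> 'a \<Rightarrow> 'a" where
  "defect_vector \<phi> S k = (\<lambda>a. if a \<in> S then left_defect \<phi> a k else 0)"

lemma linear_defect_vector: "is_character \<phi> \<Longrightarrow> linear (defect_vector \<phi> S)"
  by (rule linearI)
    (auto simp: defect_vector_def fun_eq_iff character_scaleR scaleC_add_right scaleC_scaleR_commute
      scaleR_diff_right algebra_simps simp flip: scaleR_conv_of_real)

lemma scaleC_left_defect: "scaleC c (left_defect \<phi> a k) = left_defect \<phi> a (scaleC c k)"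
  by (simp add: scaleC_diff_right mult_scaleC_right scaleC_scaleC mult.commute)

lemma sum_complexify_left_defect:
  assumes g: "linear g" and S: "finite S"
  shows "(\<Sum>a\<in>S. complexify (g \<circ> point_fun a) (left_defect \<phi> a k)) = complexify (g \<circ> defect_vector \<phi> S) k"
proof -
  have real_sum: "(\<Sum>a\<in>S. g (point_fun a (left_defect \<phi> a k))) = g (defect_vector \<phi> S k)" for k
    by (simp add: linear_sum[OF g, symmetric] sum_point_fun[OF S] defect_vector_def)
  have "(\<Sum>a\<in>S. complexify (g \<circ> point_fun a) (left_defect \<phi> a k))
      = (of_real (\<Sum>a\<in>S. g (point_fun a (left_defect \<phi> a k)))
         - \<i> * of_real (\<Sum>a\<in>S. g (point_fun a (left_defect \<phi> a (scaleC \<i> k))))) / 2"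
    by (simp add: complexify_def scaleC_left_defect sum_divide_distrib[symmetric] sum_subtractf
        sum_distrib_left)
  then show ?thesis by (simp only: real_sum complexify_def o_def)
qed

section \<open>The Banach bimodule \<open>(ker \<phi>)*\<close>\<close>

text \<open>The dual \<open>(ker \<phi>)*\<close>, represented by the complex functions on \<open>A\<close> that vanish off
  \<open>ker \<phi>\<close> and are linear and bounded on \<open>ker \<phi>\<close>.\<close>

definition ker_dual :: "('a::complex_banach_algebra \<Rightarrow> complex) \<Rightarrow> ('a \<Rightarrow> complex) set" where
  "ker_dual \<phi> = {f. (\<forall>k. \<phi> k \<noteq> 0 \<longrightarrow> f k = 0) \<and>
     (\<forall>k l. \<phi> k = 0 \<longrightarrow> \<phi> l = 0 \<longrightarrow> f (k + l) = f k + f l) \<and>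
     (\<forall>c k. \<phi> k = 0 \<longrightarrow> f (scaleC c k) = c * f k) \<and>
     (\<exists>K. \<forall>k. \<phi> k = 0 \<longrightarrow> cmod (f k) \<le> K * norm k)}"

definition ker_dual_norm :: "('a::complex_banach_algebra \<Rightarrow> complex) \<Rightarrow> ('a \<Rightarrow> complex) \<Rightarrow> real" where
  "ker_dual_norm \<phi> f = Sup {cmod (f k) | k. \<phi> k = 0 \<and> norm k \<le> 1}"

lemma ker_dualI:
  assumes "\<And>k. \<phi> k \<noteq> 0 \<Longrightarrow> f k = 0"
    "\<And>k l. \<phi> k = 0 \<Longrightarrow> \<phi> l = 0 \<Longrightarrow> f (k + l) = f k + f l"
    "\<And>c k. \<phi> k = 0 \<Longrightarrow> f (scaleC c k) = c * f k"
    "\<And>k. \<phi> k = 0 \<Longrightarrow> cmod (f k) \<le> K * norm k"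
  shows "f \<in> ker_dual \<phi>"
  using assms unfolding ker_dual_def by blast

lemma ker_dualD:
  assumes "f \<in> ker_dual \<phi>"
  shows "\<And>k. \<phi> k \<noteq> 0 \<Longrightarrow> f k = 0"
    "\<And>k l. \<phi> k = 0 \<Longrightarrow> \<phi> l = 0 \<Longrightarrow> f (k + l) = f k + f l"
    "\<And>c k. \<phi> k = 0 \<Longrightarrow> f (scaleC c k) = c * f k"
    "\<exists>K. \<forall>k. \<phi> k = 0 \<longrightarrow> cmod (f k) \<le> K * norm k"
  using assms unfolding ker_dual_def by blast+

lemma ker_dual_apply_0: "f \<in> ker_dual \<phi> \<Longrightarrow> is_character \<phi> \<Longrightarrow> f 0 = 0"
  using ker_dualD(2)[of f \<phi> 0 0] character_zero[of \<phi>] by simp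

lemma bdd_above_ker_dual_norm:
  assumes "f \<in> ker_dual \<phi>"
  shows "bdd_above {cmod (f k) | k. \<phi> k = 0 \<and> norm k \<le> 1}"
proof -
  obtain K where K: "\<And>k. \<phi> k = 0 \<Longrightarrow> cmod (f k) \<le> K * norm k" using ker_dualD(4)[OF assms] by blast
  have "cmod (f k) \<le> max K 0" if "\<phi> k = 0" "norm k \<le> 1" for k
  proof -
    have "cmod (f k) \<le> K * norm k" by (rule K[OF that(1)])
    also have "\<dots> \<le> max K 0 * norm k" by (rule mult_right_mono) auto
    also have "\<dots> \<le> max K 0 * 1" by (rule mult_left_mono[OF that(2)]) auto
    finally show ?thesis by simp
  qed
  thus ?thesis unfolding bdd_above_def by blast
qed

lemma ker_dual_norm_upper:
  assumes "f \<in> ker_dual \<phi>" "\<phi> k = 0" "norm k \<le> 1"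
  shows "cmod (f k) \<le> ker_dual_norm \<phi> f"
  unfolding ker_dual_norm_def by (rule cSup_upper[OF _ bdd_above_ker_dual_norm[OF assms(1)]]) (use assms in blast)

lemma ker_dual_norm_le:
  assumes ch: "is_character \<phi>" and "\<And>k. \<phi> k = 0 \<Longrightarrow> norm k \<le> 1 \<Longrightarrow> cmod (f k) \<le> B"
  shows "ker_dual_norm \<phi> f \<le> B"
  unfolding ker_dual_norm_def
  by (rule cSup_least) (use assms character_zero[OF ch] in \<open>fastforce+\<close>)

lemma ker_dual_norm_nonneg:
  assumes ch: "is_character \<phi>" and f: "f \<in> ker_dual \<phi>"
  shows "0 \<le> ker_dual_norm \<phi> f"
  using ker_dual_norm_upper[OF f character_zero[OF ch]] norm_ge_zero[of "f 0"] by (simp del: norm_ge_zero)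

lemma norm_ker_dual_apply_le:
  assumes ch: "is_character \<phi>" and f: "f \<in> ker_dual \<phi>" and k: "\<phi> k = 0"
  shows "cmod (f k) \<le> ker_dual_norm \<phi> f * norm k"
proof (cases "k = 0")
  case True then show ?thesis using ker_dual_apply_0[OF f ch] by simp
next
  case False
  define k' where "k' = scaleC (of_real (1 / norm k)) k"
  have nk: "norm k' = 1" using False by (simp add: k'_def norm_scaleC norm_divide)
  have pk: "\<phi> k' = 0" using k by (simp add: k'_def character_scaleC[OF ch])
  have "f k' = of_real (1 / norm k) * f k" unfolding k'_def by (rule ker_dualD(3)[OF f k])
  hence "cmod (f k') = cmod (f k) / norm k" by (simp add: norm_mult norm_divide)
  moreover have "cmod (f k') \<le> ker_dual_norm \<phi> f" by (rule ker_dual_norm_upper[OF f pk]) (simp add: nk)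
  ultimately have "norm k * cmod (f k') = cmod (f k)" "cmod (f k') \<le> ker_dual_norm \<phi> f" using False by (simp_all add: field_simps)
  thus ?thesis by (metis mult.commute mult_left_mono norm_ge_zero)
qed

lemma zero_in_ker_dual: "(\<lambda>_. 0) \<in> ker_dual \<phi>"
  by (rule ker_dualI[where K=0]) auto

lemma ker_dual_add:
  assumes "f \<in> ker_dual \<phi>" "g \<in> ker_dual \<phi>"
  shows "(\<lambda>k. f k + g k) \<in> ker_dual \<phi>"
proof -
  obtain K1 where K1: "\<forall>k. \<phi> k = 0 \<longrightarrow> cmod (f k) \<le> K1 * norm k" using ker_dualD(4)[OF assms(1)] by blast
  obtain K2 where K2: "\<forall>k. \<phi> k = 0 \<longrightarrow> cmod (g k) \<le> K2 * norm k" using ker_dualD(4)[OF assms(2)] by blast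
  show ?thesis
  proof (rule ker_dualI[where K="K1 + K2"])
    fix k assume k: "\<phi> k = 0"
    have "cmod (f k + g k) \<le> cmod (f k) + cmod (g k)" by (rule norm_triangle_ineq)
    also have "\<dots> \<le> (K1 + K2) * norm k" using K1 K2 k by (simp add: distrib_right add_mono)
    finally show "cmod (f k + g k) \<le> (K1 + K2) * norm k" .
  qed (use ker_dualD[OF assms(1)] ker_dualD[OF assms(2)] in \<open>auto simp: algebra_simps\<close>)
qed

lemma ker_dual_scale:
  assumes "f \<in> ker_dual \<phi>"
  shows "(\<lambda>k. c * f k) \<in> ker_dual \<phi>"
proof -
  obtain K where K: "\<forall>k. \<phi> k = 0 \<longrightarrow> cmod (f k) \<le> K * norm k" using ker_dualD(4)[OF assms(1)] by blast
  show ?thesis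
  proof (rule ker_dualI[where K="cmod c * K"])
    fix k assume k: "\<phi> k = 0"
    show "cmod (c * f k) \<le> cmod c * K * norm k" using K k
      by (simp add: norm_mult mult.assoc mult_left_mono)
  qed (use ker_dualD[OF assms(1)] in \<open>auto simp: algebra_simps\<close>)
qed

lemma ker_dual_right_action:
  assumes ch: "is_character \<phi>" and f: "f \<in> ker_dual \<phi>"
  shows "(\<lambda>k. if \<phi> k = 0 then f (a * k) else 0) \<in> ker_dual \<phi>"
proof (rule ker_dualI[where K="ker_dual_norm \<phi> f * norm a"])
  fix k assume k: "\<phi> k = 0"
  have ak: "\<phi> (a * k) = 0" using k by (simp add: character_mult[OF ch])
  have "cmod (f (a * k)) \<le> ker_dual_norm \<phi> f * norm (a * k)" by (rule norm_ker_dual_apply_le[OF ch f ak])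
  also have "\<dots> \<le> ker_dual_norm \<phi> f * (norm a * norm k)"
    by (rule mult_left_mono[OF norm_mult_ineq ker_dual_norm_nonneg[OF ch f]])
  finally show "cmod (if \<phi> k = 0 then f (a * k) else 0) \<le> ker_dual_norm \<phi> f * norm a * norm k"
    using k by (simp add: mult.assoc)
next
  fix k l assume k: "\<phi> k = 0" and l: "\<phi> l = 0"
  thus "(if \<phi> (k + l) = 0 then f (a * (k + l)) else 0) = (if \<phi> k = 0 then f (a * k) else 0) + (if \<phi> l = 0 then f (a * l) else 0)"
    using ker_dualD(2)[OF f, of "a * k" "a * l"] by (simp add: character_add[OF ch] character_mult[OF ch] distrib_left)
next
  fix c k assume k: "\<phi> k = 0"
  thus "(if \<phi> (scaleC c k) = 0 then f (a * scaleC c k) else 0) = c * (if \<phi> k = 0 then f (a * k) else 0)"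
    using ker_dualD(3)[OF f, of "a * k" c] by (simp add: character_scaleC[OF ch] character_mult[OF ch] mult_scaleC_right)
qed simp

lemma ker_dual_norm_add_le:
  assumes ch: "is_character \<phi>" and f: "f \<in> ker_dual \<phi>" and g: "g \<in> ker_dual \<phi>"
  shows "ker_dual_norm \<phi> (\<lambda>k. f k + g k) \<le> ker_dual_norm \<phi> f + ker_dual_norm \<phi> g"
proof (rule ker_dual_norm_le[OF ch])
  fix k assume k: "\<phi> k = 0" "norm k \<le> 1"
  have "cmod (f k + g k) \<le> cmod (f k) + cmod (g k)" by (rule norm_triangle_ineq)
  also have "\<dots> \<le> ker_dual_norm \<phi> f + ker_dual_norm \<phi> g" using ker_dual_norm_upper[OF f k] ker_dual_norm_upper[OF g k] by simp
  finally show "cmod (f k + g k) \<le> ker_dual_norm \<phi> f + ker_dual_norm \<phi> g" .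
qed

lemma ker_dual_norm_scale_le:
  assumes ch: "is_character \<phi>" and f: "f \<in> ker_dual \<phi>"
  shows "ker_dual_norm \<phi> (\<lambda>k. c * f k) \<le> cmod c * ker_dual_norm \<phi> f"
proof (rule ker_dual_norm_le[OF ch])
  fix k assume k: "\<phi> k = 0" "norm k \<le> 1"
  show "cmod (c * f k) \<le> cmod c * ker_dual_norm \<phi> f"
    using ker_dual_norm_upper[OF f k] by (simp add: norm_mult mult_left_mono)
qed

lemma ker_dual_norm_scale:
  assumes ch: "is_character \<phi>" and f: "f \<in> ker_dual \<phi>"
  shows "ker_dual_norm \<phi> (\<lambda>k. c * f k) = cmod c * ker_dual_norm \<phi> f"
proof (cases "c = 0")
  case True
  have "ker_dual_norm \<phi> (\<lambda>k. c * f k) \<le> 0" using ker_dual_norm_scale_le[OF ch f, of c] True by simp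
  moreover have "0 \<le> ker_dual_norm \<phi> (\<lambda>k. c * f k)" by (rule ker_dual_norm_nonneg[OF ch ker_dual_scale[OF f]])
  ultimately show ?thesis using True by simp
next
  case False
  have "ker_dual_norm \<phi> f = ker_dual_norm \<phi> (\<lambda>k. (1/c) * (c * f k))" using False by simp
  also have "\<dots> \<le> cmod (1/c) * ker_dual_norm \<phi> (\<lambda>k. c * f k)" by (rule ker_dual_norm_scale_le[OF ch ker_dual_scale[OF f]])
  finally have "cmod c * ker_dual_norm \<phi> f \<le> ker_dual_norm \<phi> (\<lambda>k. c * f k)"
    using False by (simp add: norm_divide field_simps)
  thus ?thesis using ker_dual_norm_scale_le[OF ch f, of c] by simp
qed

lemma ker_dual_norm_eq_0_iff:
  assumes ch: "is_character \<phi>" and f: "f \<in> ker_dual \<phi>"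
  shows "ker_dual_norm \<phi> f = 0 \<longleftrightarrow> f = (\<lambda>_. 0)"
proof
  assume "ker_dual_norm \<phi> f = 0"
  hence "f k = 0" for k using norm_ker_dual_apply_le[OF ch f, of k] ker_dualD(1)[OF f, of k] by (cases "\<phi> k = 0") auto
  thus "f = (\<lambda>_. 0)" by auto
next
  assume "f = (\<lambda>_. 0)"
  thus "ker_dual_norm \<phi> f = 0" using ker_dual_norm_le[OF ch, of "\<lambda>_. 0" 0] ker_dual_norm_nonneg[OF ch zero_in_ker_dual] by simp
qed

lemma ker_dual_norm_right_action_le:
  assumes ch: "is_character \<phi>" and f: "f \<in> ker_dual \<phi>"
  shows "ker_dual_norm \<phi> (\<lambda>k. if \<phi> k = 0 then f (a * k) else 0) \<le> norm a * ker_dual_norm \<phi> f"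
proof (rule ker_dual_norm_le[OF ch])
  fix k assume k: "\<phi> k = 0" "norm k \<le> 1"
  have ak: "\<phi> (a * k) = 0" using k by (simp add: character_mult[OF ch])
  have "cmod (f (a * k)) \<le> ker_dual_norm \<phi> f * norm (a * k)" by (rule norm_ker_dual_apply_le[OF ch f ak])
  also have "\<dots> \<le> ker_dual_norm \<phi> f * (norm a * norm k)"
    by (rule mult_left_mono[OF norm_mult_ineq ker_dual_norm_nonneg[OF ch f]])
  also have "\<dots> \<le> ker_dual_norm \<phi> f * (norm a * 1)"
    by (intro mult_left_mono k(2) ker_dual_norm_nonneg[OF ch f] norm_ge_zero)
  finally show "cmod (if \<phi> k = 0 then f (a * k) else 0) \<le> norm a * ker_dual_norm \<phi> f" using k by (simp add: mult.commute)
qed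

lemma ker_dual_norm_left_action_le:
  assumes ch: "is_character \<phi>" and f: "f \<in> ker_dual \<phi>"
  shows "ker_dual_norm \<phi> (\<lambda>k. \<phi> a * f k) \<le> norm a * ker_dual_norm \<phi> f"
  using ker_dual_norm_scale[OF ch f, of "\<phi> a"] norm_character_le[OF ch, of a] ker_dual_norm_nonneg[OF ch f]
  by (simp add: mult_right_mono)

lemma ker_dual_diff: "f \<in> ker_dual \<phi> \<Longrightarrow> g \<in> ker_dual \<phi> \<Longrightarrow> (\<lambda>k. f k - g k) \<in> ker_dual \<phi>"
  using ker_dual_add[OF _ ker_dual_scale, of f \<phi> g "-1"] by simp

lemma ker_dual_sum:
  "finite S \<Longrightarrow> (\<And>a. a \<in> S \<Longrightarrow> d a \<in> ker_dual \<phi>) \<Longrightarrow> (\<lambda>k. \<Sum>a\<in>S. d a k) \<in> ker_dual \<phi>"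
  by (induction S rule: finite_induct) (simp_all add: zero_in_ker_dual ker_dual_add)

lemma norm_ker_dual_diff_apply_le:
  assumes ch: "is_character \<phi>" and f: "f \<in> ker_dual \<phi>" and g: "g \<in> ker_dual \<phi>" and k: "\<phi> k = 0"
  shows "cmod (f k - g k) \<le> ker_dual_norm \<phi> (\<lambda>k. f k - g k) * norm k"
  using norm_ker_dual_apply_le[OF ch ker_dual_diff[OF f g] k] .


lemma ker_dual_limit_bound:
  assumes ch: "is_character \<phi>" and f: "\<And>n. f n \<in> ker_dual \<phi>"
    and cau: "\<And>m n. m \<ge> N \<Longrightarrow> n \<ge> N \<Longrightarrow> ker_dual_norm \<phi> (\<lambda>k. f m k - f n k) \<le> e"
    and lim: "(\<lambda>n. f n k) \<longlonglongrightarrow> l" and k: "\<phi> k = 0" and n: "n \<ge> N"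
  shows "cmod (f n k - l) \<le> e * norm k"
proof (rule tendsto_upperbound[OF tendsto_norm[OF tendsto_diff[OF tendsto_const lim]]])
  show "eventually (\<lambda>m. cmod (f n k - f m k) \<le> e * norm k) sequentially"
    using eventually_ge_at_top[of N]
  proof (rule eventually_mono)
    fix m assume "m \<ge> N"
    have "cmod (f n k - f m k) \<le> ker_dual_norm \<phi> (\<lambda>k. f n k - f m k) * norm k"
      by (rule norm_ker_dual_diff_apply_le[OF ch f f k])
    also have "\<dots> \<le> e * norm k" by (rule mult_right_mono[OF cau[OF n \<open>m \<ge> N\<close>] norm_ge_zero])
    finally show "cmod (f n k - f m k) \<le> e * norm k" .
  qed
qed simp

lemma convergent_ker_dual_apply:
  assumes ch: "is_character \<phi>" and f: "\<And>n. f n \<in> ker_dual \<phi>" and k: "\<phi> k = 0"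
    and cau: "\<And>e. e > 0 \<Longrightarrow> \<exists>N. \<forall>m\<ge>N. \<forall>n\<ge>N. ker_dual_norm \<phi> (\<lambda>k. f m k - f n k) < e"
  shows "convergent (\<lambda>n. f n k)"
proof (rule Cauchy_convergent, rule metric_CauchyI)
  fix e :: real assume "e > 0"
  have "norm k + 1 > 0" by (rule add_nonneg_pos) simp_all
  then obtain N where N: "\<And>m n. m \<ge> N \<Longrightarrow> n \<ge> N \<Longrightarrow> ker_dual_norm \<phi> (\<lambda>k. f m k - f n k) < e / (norm k + 1)"
    using cau[OF divide_pos_pos[OF \<open>e > 0\<close>]] by blast
  have "dist (f m k) (f n k) < e" if "m \<ge> N" "n \<ge> N" for m n
  proof -
    have "dist (f m k) (f n k) \<le> ker_dual_norm \<phi> (\<lambda>k. f m k - f n k) * norm k"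
      unfolding dist_norm by (rule norm_ker_dual_diff_apply_le[OF ch f f k])
    also have "\<dots> \<le> e / (norm k + 1) * norm k" by (rule mult_right_mono) (use N[OF that] in auto)
    also have "\<dots> < e" using \<open>e > 0\<close> \<open>norm k + 1 > 0\<close> by (simp add: field_simps)
    finally show ?thesis .
  qed
  then show "\<exists>M. \<forall>m\<ge>M. \<forall>n\<ge>M. dist (f m k) (f n k) < e" by blast
qed

lemma ker_dual_pointwise_limit:
  assumes ch: "is_character \<phi>" and f: "\<And>n. f n \<in> ker_dual \<phi>"
    and lim: "\<And>k. \<phi> k = 0 \<Longrightarrow> (\<lambda>n. f n k) \<longlonglongrightarrow> l k" and l0: "\<And>k. \<phi> k \<noteq> 0 \<Longrightarrow> l k = 0"
    and bound: "\<And>k. \<phi> k = 0 \<Longrightarrow> cmod (l k) \<le> K * norm k"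
  shows "l \<in> ker_dual \<phi>"
proof (rule ker_dualI[OF l0 _ _ bound])
  fix k k' assume k: "\<phi> k = 0" and k': "\<phi> k' = 0"
  have "(\<lambda>n. f n (k + k')) \<longlonglongrightarrow> l k + l k'"
    using tendsto_add[OF lim[OF k] lim[OF k']] ker_dualD(2)[OF f k k'] by simp
  moreover have "\<phi> (k + k') = 0" using k k' by (simp add: character_add[OF ch])
  ultimately show "l (k + k') = l k + l k'" using LIMSEQ_unique lim by blast
next
  fix c k assume k: "\<phi> k = 0"
  have "(\<lambda>n. f n (scaleC c k)) \<longlonglongrightarrow> c * l k"
    using tendsto_mult_left[OF lim[OF k], of c] ker_dualD(3)[OF f k] by simp
  moreover have "\<phi> (scaleC c k) = 0" using k by (simp add: character_scaleC[OF ch])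
  ultimately show "l (scaleC c k) = c * l k" using LIMSEQ_unique lim by blast
qed

lemma ker_dual_complete:
  assumes ch: "is_character \<phi>" and f: "\<And>n. f n \<in> ker_dual \<phi>"
    and cau: "\<And>e. e > 0 \<Longrightarrow> \<exists>N. \<forall>m\<ge>N. \<forall>n\<ge>N. ker_dual_norm \<phi> (\<lambda>k. f m k - f n k) < e"
  obtains l where "l \<in> ker_dual \<phi>" and "(\<lambda>n. ker_dual_norm \<phi> (\<lambda>k. f n k - l k)) \<longlonglongrightarrow> 0"
proof -
  have cau': "\<exists>N. \<forall>m\<ge>N. \<forall>n\<ge>N. ker_dual_norm \<phi> (\<lambda>k. f m k - f n k) \<le> e" if "e > 0" for e
    using cau[OF that] by (meson less_imp_le)
  define l where "l k = (if \<phi> k = 0 then lim (\<lambda>n. f n k) else 0)" for k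
  have lim: "(\<lambda>n. f n k) \<longlonglongrightarrow> l k" if "\<phi> k = 0" for k
    using convergent_ker_dual_apply[OF ch f that cau] by (simp add: l_def that convergent_LIMSEQ_iff)
  have tail: "cmod (f n k - l k) \<le> e * norm k"
    if "\<phi> k = 0" "n \<ge> N" "\<And>m n. m \<ge> N \<Longrightarrow> n \<ge> N \<Longrightarrow> ker_dual_norm \<phi> (\<lambda>k. f m k - f n k) \<le> e"
    for n k N e
    by (rule ker_dual_limit_bound[OF ch f that(3) lim[OF that(1)] that(1,2)])
  obtain N\<^sub>1 where N\<^sub>1: "\<And>m n. m \<ge> N\<^sub>1 \<Longrightarrow> n \<ge> N\<^sub>1 \<Longrightarrow> ker_dual_norm \<phi> (\<lambda>k. f m k - f n k) \<le> 1"
    using cau'[of 1] by auto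
  have l_bound: "cmod (l k) \<le> (ker_dual_norm \<phi> (f N\<^sub>1) + 1) * norm k" if k: "\<phi> k = 0" for k
  proof -
    have "cmod (l k) \<le> cmod (f N\<^sub>1 k) + cmod (f N\<^sub>1 k - l k)"
      by (metis norm_minus_commute norm_triangle_sub)
    also have "\<dots> \<le> ker_dual_norm \<phi> (f N\<^sub>1) * norm k + 1 * norm k"
      by (intro add_mono norm_ker_dual_apply_le[OF ch f k] tail[OF k order_refl N\<^sub>1])
    finally show ?thesis by (simp add: algebra_simps)
  qed
  have "l \<in> ker_dual \<phi>"
    by (rule ker_dual_pointwise_limit[where K="ker_dual_norm \<phi> (f N\<^sub>1) + 1"])
      (use ch f lim l_bound in \<open>auto simp: l_def\<close>)
  moreover have "(\<lambda>n. ker_dual_norm \<phi> (\<lambda>k. f n k - l k)) \<longlonglongrightarrow> 0"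
  proof (rule LIMSEQ_I)
    fix e :: real assume "e > 0"
    then obtain N where N: "\<And>m n. m \<ge> N \<Longrightarrow> n \<ge> N \<Longrightarrow> ker_dual_norm \<phi> (\<lambda>k. f m k - f n k) \<le> e / 2"
      using cau'[of "e / 2"] by auto
    have small: "ker_dual_norm \<phi> (\<lambda>k. f n k - l k) \<le> e / 2" if "n \<ge> N" for n
    proof (rule ker_dual_norm_le[OF ch])
      fix k assume k: "\<phi> k = 0" "norm k \<le> 1"
      have "cmod (f n k - l k) \<le> e / 2 * norm k" by (rule tail[OF k(1) that N])
      also have "\<dots> \<le> e / 2" using k(2) \<open>e > 0\<close> by (simp add: mult_left_le)
      finally show "cmod (f n k - l k) \<le> e / 2" .
    qed
    have "norm (ker_dual_norm \<phi> (\<lambda>k. f n k - l k) - 0) < e" if "n \<ge> N" for n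
      using small[OF that] ker_dual_norm_nonneg[OF ch ker_dual_diff[OF f \<open>l \<in> ker_dual \<phi>\<close>]] \<open>e > 0\<close>
      by simp
    then show "\<exists>N. \<forall>n\<ge>N. norm (ker_dual_norm \<phi> (\<lambda>k. f n k - l k) - 0) < e" by blast
  qed
  ultimately show ?thesis by (rule that)
qed

text \<open>Approximate amenability only quantifies over modules carried by the type
  \<open>('a \<Rightarrow> complex) \<Rightarrow> complex\<close>; a functional \<open>f\<close> is embedded there as the indicator of \<open>{f}\<close>.\<close>

definition embed_fun :: "('a \<Rightarrow> complex) \<Rightarrow> (('a \<Rightarrow> complex) \<Rightarrow> complex)" where
  "embed_fun f = (\<lambda>g. if g = f then 1 else 0)"

definition unembed_fun :: "(('a \<Rightarrow> complex) \<Rightarrow> complex) \<Rightarrow> ('a \<Rightarrow> complex)" where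
  "unembed_fun X = (SOME f. X = embed_fun f)"

lemma embed_fun_eq_iff [simp]: "embed_fun f = embed_fun g \<longleftrightarrow> f = g"
  unfolding embed_fun_def by (metis one_neq_zero)

lemma unembed_fun_embed_fun [simp]: "unembed_fun (embed_fun f) = f"
  unfolding unembed_fun_def by (rule some_equality) auto

lemma embed_fun_in_image_iff [simp]: "embed_fun f \<in> embed_fun ` A \<longleftrightarrow> f \<in> A"
  by (auto simp: image_iff)

text \<open>The Banach \<open>A\<close>-bimodule \<open>(ker \<phi>)*\<close> with \<open>a\<cdot>f = \<phi>(a) f\<close> and \<open>(f\<cdot>a)(k) = f(a k)\<close>.\<close>

definition ker_dual_module :: "('a::complex_banach_algebra \<Rightarrow> complex) \<Rightarrow> ('a, ('a \<Rightarrow> complex) \<Rightarrow> complex) bimod" where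
  "ker_dual_module \<phi> = \<lparr>bcarrier = embed_fun ` ker_dual \<phi>,
     bzero = embed_fun (\<lambda>_. 0),
     badd = (\<lambda>X Y. embed_fun (\<lambda>k. unembed_fun X k + unembed_fun Y k)),
     bscale = (\<lambda>c X. embed_fun (\<lambda>k. c * unembed_fun X k)),
     bnorm = (\<lambda>X. ker_dual_norm \<phi> (unembed_fun X)),
     blact = (\<lambda>a X. embed_fun (\<lambda>k. \<phi> a * unembed_fun X k)),
     bract = (\<lambda>X a. embed_fun (\<lambda>k. if \<phi> k = 0 then unembed_fun X (a * k) else 0))\<rparr>"

lemma ker_dual_module_simps:
  "bcarrier (ker_dual_module \<phi>) = embed_fun ` ker_dual \<phi>"
  "bzero (ker_dual_module \<phi>) = embed_fun (\<lambda>_. 0)"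
  "badd (ker_dual_module \<phi>) X Y = embed_fun (\<lambda>k. unembed_fun X k + unembed_fun Y k)"
  "bscale (ker_dual_module \<phi>) c X = embed_fun (\<lambda>k. c * unembed_fun X k)"
  "bnorm (ker_dual_module \<phi>) X = ker_dual_norm \<phi> (unembed_fun X)"
  "blact (ker_dual_module \<phi>) a X = embed_fun (\<lambda>k. \<phi> a * unembed_fun X k)"
  "bract (ker_dual_module \<phi>) X a = embed_fun (\<lambda>k. if \<phi> k = 0 then unembed_fun X (a * k) else 0)"
  by (simp_all add: ker_dual_module_def)

lemma banach_bimodule_ker_dual_module:
  assumes ch: "is_character \<phi>"
  shows "banach_bimodule (ker_dual_module \<phi>)"
proof -
  have complete: "\<forall>s. (\<forall>n. s n \<in> embed_fun ` ker_dual \<phi>) \<longrightarrow>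
      (\<forall>e>0. \<exists>N. \<forall>m\<ge>N. \<forall>n\<ge>N. ker_dual_norm \<phi> (\<lambda>k. unembed_fun (s m) k - unembed_fun (s n) k) < e) \<longrightarrow>
      (\<exists>l\<in>ker_dual \<phi>. (\<lambda>n. ker_dual_norm \<phi> (\<lambda>k. unembed_fun (s n) k - l k)) \<longlonglongrightarrow> 0)"
  proof (intro allI impI)
    fix s :: "nat \<Rightarrow> ('a \<Rightarrow> complex) \<Rightarrow> complex"
    assume "\<forall>n. s n \<in> embed_fun ` ker_dual \<phi>"
    then have "unembed_fun (s n) \<in> ker_dual \<phi>" for n by (metis imageE unembed_fun_embed_fun)
    moreover assume "\<forall>e>0. \<exists>N. \<forall>m\<ge>N. \<forall>n\<ge>N. ker_dual_norm \<phi> (\<lambda>k. unembed_fun (s m) k - unembed_fun (s n) k) < e"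
    ultimately show "\<exists>l\<in>ker_dual \<phi>. (\<lambda>n. ker_dual_norm \<phi> (\<lambda>k. unembed_fun (s n) k - l k)) \<longlonglongrightarrow> 0"
      using ker_dual_complete[OF ch, of "\<lambda>n. unembed_fun (s n)"] by blast
  qed
  have left_bound: "\<exists>K. \<forall>a. \<forall>x\<in>ker_dual \<phi>. cmod (\<phi> a) * ker_dual_norm \<phi> x \<le> K * (norm a * ker_dual_norm \<phi> x)"
    by (auto intro!: exI[of _ 1] mult_right_mono norm_character_le[OF ch] ker_dual_norm_nonneg[OF ch])
  have right_bound: "\<exists>K. \<forall>a. \<forall>x\<in>ker_dual \<phi>.
      ker_dual_norm \<phi> (\<lambda>k. if \<phi> k = 0 then x (a * k) else 0) \<le> K * (norm a * ker_dual_norm \<phi> x)"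
    by (rule exI[of _ 1]) (simp add: ker_dual_norm_right_action_le[OF ch])
  have pointwise: "embed_fun F = embed_fun G \<longleftrightarrow> (\<forall>k. F k = G k)" for F G :: "'a \<Rightarrow> complex"
    unfolding embed_fun_eq_iff by (rule fun_eq_iff)
  have zero_iff: "f = (\<lambda>_. 0) \<longleftrightarrow> (\<forall>k. f k = 0)" for f :: "'a \<Rightarrow> complex"
    by (rule fun_eq_iff)
  show ?thesis
    unfolding banach_bimodule_def Let_def ker_dual_module_simps Ball_image_comp o_def
    by (intro conjI)
      (simp_all del: embed_fun_eq_iff add: pointwise zero_iff complete left_bound right_bound zero_in_ker_dual ker_dual_add
        ker_dual_scale ker_dual_right_action[OF ch] ker_dual_norm_nonneg[OF ch]
        ker_dual_norm_eq_0_iff[OF ch] ker_dual_norm_add_le[OF ch] ker_dual_norm_scale[OF ch]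
        ker_dualD(2,3) character_add[OF ch] character_mult[OF ch] character_scaleC[OF ch]
        ring_distribs mult_scaleC_left mult_scaleC_right mult.assoc mult.left_commute cong: if_cong)
qed

lemma dnorm_le:
  assumes "z \<in> bcarrier M" "bnorm M z \<le> 1"
    and "\<And>x. x \<in> bcarrier M \<Longrightarrow> bnorm M x \<le> 1 \<Longrightarrow> cmod (h x) \<le> B"
  shows "dnorm M h \<le> B"
  unfolding dnorm_def by (rule cSup_least) (use assms in auto)

lemma dnorm_upper:
  assumes "x \<in> bcarrier M" "bnorm M x \<le> 1"
    and "\<And>x. x \<in> bcarrier M \<Longrightarrow> bnorm M x \<le> 1 \<Longrightarrow> cmod (h x) \<le> B"
  shows "cmod (h x) \<le> dnorm M h"
  unfolding dnorm_def by (rule cSup_upper) (use assms in \<open>auto intro!: bdd_aboveI2\<close>)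

lemma left_defect_add: "is_character \<phi> \<Longrightarrow> left_defect \<phi> (a + b) v = left_defect \<phi> a v + left_defect \<phi> b v"
  by (simp add: character_add scaleC_add_left algebra_simps)

lemma left_defect_scaleC: "is_character \<phi> \<Longrightarrow> left_defect \<phi> (scaleC c a) v = scaleC c (left_defect \<phi> a v)"
  by (simp add: character_scaleC mult_scaleC_left scaleC_diff_right scaleC_scaleC)

lemma left_defect_mult:
  "is_character \<phi> \<Longrightarrow> left_defect \<phi> (a * b) v = a * left_defect \<phi> b v + scaleC (\<phi> b) (left_defect \<phi> a v)"
  by (simp add: character_mult algebra_simps mult_scaleC_right scaleC_diff_right scaleC_scaleC
      mult.assoc mult.commute)

lemma ker_dual_apply_left_defect:
  assumes ch: "is_character \<phi>" and f: "f \<in> ker_dual \<phi>"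
  shows "f (left_defect \<phi> (a + b) v) = f (left_defect \<phi> a v) + f (left_defect \<phi> b v)"
    and "f (left_defect \<phi> (scaleC c a) v) = c * f (left_defect \<phi> a v)"
    and "f (left_defect \<phi> (a * b) v) = f (a * left_defect \<phi> b v) + \<phi> b * f (left_defect \<phi> a v)"
proof -
  note ker = character_left_defect[OF ch]
  show "f (left_defect \<phi> (a + b) v) = f (left_defect \<phi> a v) + f (left_defect \<phi> b v)"
    unfolding left_defect_add[OF ch] by (rule ker_dualD(2)[OF f ker ker])
  show "f (left_defect \<phi> (scaleC c a) v) = c * f (left_defect \<phi> a v)"
    unfolding left_defect_scaleC[OF ch] by (rule ker_dualD(3)[OF f ker])
  have "\<phi> (a * left_defect \<phi> b v) = 0" "\<phi> (scaleC (\<phi> b) (left_defect \<phi> a v)) = 0"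
    using ker by (simp_all add: character_mult[OF ch] character_scaleC[OF ch])
  then show "f (left_defect \<phi> (a * b) v) = f (a * left_defect \<phi> b v) + \<phi> b * f (left_defect \<phi> a v)"
    unfolding left_defect_mult[OF ch] by (simp add: ker_dualD(2,3)[OF f] ker)
qed

text \<open>Evaluation at \<open>a u - \<phi>(a) u \<in> ker \<phi>\<close>; the Leibniz rule is the identity
  \<open>left_defect_mult\<close>.\<close>

definition kernel_derivation :: "('a::complex_banach_algebra \<Rightarrow> complex) \<Rightarrow> 'a \<Rightarrow> 'a \<Rightarrow> (('a \<Rightarrow> complex) \<Rightarrow> complex) \<Rightarrow> complex" where
  "kernel_derivation \<phi> u a X = unembed_fun X (left_defect \<phi> a u)"

lemma continuous_derivation_kernel_derivation:
  assumes ch: "is_character \<phi>"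
  shows "continuous_derivation (ker_dual_module \<phi>) (kernel_derivation \<phi> u)"
proof -
  note ker = character_left_defect[OF ch]
  have "cmod (f (left_defect \<phi> a u)) \<le> 2 * norm u * norm a" if "f \<in> ker_dual \<phi>" "ker_dual_norm \<phi> f \<le> 1" for f a
  proof -
    have "cmod (f (left_defect \<phi> a u)) \<le> ker_dual_norm \<phi> f * norm (left_defect \<phi> a u)"
      by (rule norm_ker_dual_apply_le[OF ch that(1) ker])
    also have "\<dots> \<le> 1 * (2 * norm a * norm u)"
      by (rule mult_mono[OF that(2) norm_left_defect_le[OF ch]]) simp_all
    finally show ?thesis by (simp add: ac_simps)
  qed
  moreover have "ker_dual_norm \<phi> (\<lambda>_. 0) = 0"
    using ker_dual_norm_eq_0_iff[OF ch zero_in_ker_dual] by simp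
  ultimately have "dnorm (ker_dual_module \<phi>) (kernel_derivation \<phi> u a) \<le> 2 * norm u * norm a" for a
    by (intro dnorm_le[of "embed_fun (\<lambda>_. 0)"])
      (auto simp: ker_dual_module_simps kernel_derivation_def zero_in_ker_dual)
  moreover have "in_dual (ker_dual_module \<phi>) (kernel_derivation \<phi> u a)" for a
    unfolding in_dual_def ker_dual_module_simps kernel_derivation_def
    using norm_ker_dual_apply_le[OF ch _ ker]
    by (auto intro!: exI[of _ "norm (left_defect \<phi> a u)"] simp: mult.commute)
  ultimately show ?thesis
    unfolding continuous_derivation_def dlact_def dract_def ker_dual_module_simps kernel_derivation_def
    by (auto simp: ker_dual_apply_left_defect[OF ch] ker)
qed

section \<open>Left \<open>\<phi>\<close>-approximate units from approximate amenability\<close>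

lemma ker_dual_complexify:
  assumes ch: "is_character \<phi>" and g: "linear g" and bound: "\<And>k. \<bar>g k\<bar> \<le> norm k"
  shows "(\<lambda>k. if \<phi> k = 0 then complexify g k else 0) \<in> ker_dual \<phi>"
    and "ker_dual_norm \<phi> (\<lambda>k. if \<phi> k = 0 then complexify g k else 0) \<le> 1"
proof -
  have bnd: "cmod (complexify g k) \<le> norm k" for k
    by (rule norm_complexify_le[OF bound])
  show "(\<lambda>k. if \<phi> k = 0 then complexify g k else 0) \<in> ker_dual \<phi>"
    by (rule ker_dualI[where K=1])
      (simp_all add: bnd character_add[OF ch] character_scaleC[OF ch] complexify_add[OF g]
        complexify_scaleC[OF g])
  show "ker_dual_norm \<phi> (\<lambda>k. if \<phi> k = 0 then complexify g k else 0) \<le> 1"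
    by (rule ker_dual_norm_le[OF ch]) (simp add: order_trans[OF bnd])
qed

text \<open>If no \<open>v\<close> with \<open>\<phi> v = 1\<close> makes \<open>\<Sum>a\<in>S. \<parallel>a v - \<phi>(a) v\<parallel>\<close> small, then Hahn--Banach
  separates \<open>(a u - \<phi>(a) u)\<^sub>a\<close> from the defect vectors of \<open>ker \<phi>\<close> in \<open>\<ell>\<^sup>1(S, A)\<close>; the
  coordinates of the separating functional give elements of the unit ball of \<open>(ker \<phi>)*\<close>.\<close>

lemma separating_ker_dual_functionals:
  fixes \<phi> :: "'a::complex_banach_algebra \<Rightarrow> complex"
  assumes ch: "is_character \<phi>" and u: "\<phi> u = 1" and S: "finite S" and \<epsilon>: "0 < \<epsilon>"
    and far: "\<And>v. \<phi> v = 1 \<Longrightarrow> \<epsilon> \<le> (\<Sum>a\<in>S. norm (left_defect \<phi> a v))"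
  obtains f where "\<And>a. a \<in> S \<Longrightarrow> f a \<in> ker_dual \<phi>" "\<And>a. a \<in> S \<Longrightarrow> ker_dual_norm \<phi> (f a) \<le> 1"
    and "\<And>k. \<phi> k = 0 \<Longrightarrow> (\<Sum>a\<in>S. f a (left_defect \<phi> a k)) = 0"
    and "Re (\<Sum>a\<in>S. f a (left_defect \<phi> a u)) = \<epsilon> / 2"
proof -
  define p :: "('a \<Rightarrow> 'a) \<Rightarrow> real" where "p w = (\<Sum>a\<in>S. norm (w a))" for w
  define T where "T = defect_vector \<phi> S"
  define M where "M = T ` {k. \<phi> k = 0}"
  have p: "sublinear p"
    unfolding sublinear_def p_def
    by (auto simp: sum.distrib[symmetric] sum_distrib_left intro!: sum_mono norm_triangle_ineq)
  have T: "linear T" unfolding T_def by (rule linear_defect_vector[OF ch])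
  have M: "subspace M"
    unfolding M_def using bounded_linear.linear[OF bounded_linear_character[OF ch]]
    by (intro linear_subspace_image[OF T] linear_subspace_kernel)
  have pT: "p (T v) = (\<Sum>a\<in>S. norm (left_defect \<phi> a v))" for v
    unfolding p_def T_def defect_vector_def by simp
  have p_nonneg: "0 \<le> p x" for x unfolding p_def by (simp add: sum_nonneg)
  have far_M: "\<epsilon> \<le> p (T u + m)" if "m \<in> M" for m
  proof -
    obtain k where "\<phi> k = 0" "m = T k" using \<open>m \<in> M\<close> unfolding M_def by blast
    then show ?thesis using far[of "u + k"] u by (simp add: linear_add[OF T, symmetric] pT character_add[OF ch])
  qed
  obtain g where g: "linear g" "\<And>x. g x \<le> p x" "\<And>m. m \<in> M \<Longrightarrow> g m = 0" "g (T u) = \<epsilon>"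
    using hahn_banach_separation[of p M \<epsilon> "T u"] p p_nonneg M far_M \<epsilon> by blast
  have bound: "\<bar>g (point_fun a k)\<bar> \<le> norm k" if "a \<in> S" for a k
  proof -
    have p_point: "p (point_fun a k) = norm k" for k
      unfolding p_def point_fun_def using S that by (simp add: if_distrib sum.delta cong: if_cong)
    have "g (point_fun a (- k)) = - g (point_fun a k)"
      by (simp add: linear_neg[OF linear_point_fun] linear_neg[OF g(1)])
    then show ?thesis using g(2)[of "point_fun a k"] g(2)[of "point_fun a (- k)"] p_point by auto
  qed
  define f where "f a k = (if \<phi> k = 0 then complexify (g \<circ> point_fun a) k else 0)" for a k
  have f: "f a \<in> ker_dual \<phi> \<and> ker_dual_norm \<phi> (f a) \<le> 1" if "a \<in> S" for a
    using ker_dual_complexify[OF ch linear_compose[OF linear_point_fun g(1)]] bound[OF that]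
    by (simp add: f_def[abs_def])
  have sum_f: "(\<Sum>a\<in>S. f a (left_defect \<phi> a k)) = complexify (g \<circ> T) k" for k
    unfolding f_def T_def
    by (simp add: character_left_defect[OF ch] sum_complexify_left_defect[OF g(1) S])
  have "(\<Sum>a\<in>S. f a (left_defect \<phi> a k)) = 0" if "\<phi> k = 0" for k
  proof -
    have "T k \<in> M" "T (scaleC \<i> k) \<in> M"
      using that unfolding M_def by (auto simp: character_scaleC[OF ch])
    then show ?thesis by (simp add: sum_f complexify_def g(3))
  qed
  moreover have "Re (\<Sum>a\<in>S. f a (left_defect \<phi> a u)) = \<epsilon> / 2"
    by (simp add: sum_f Re_complexify g(4))
  ultimately show ?thesis using that f by blast
qed

lemma ker_dual_apply_left_defect_kernel:
  assumes ch: "is_character \<phi>" and f: "f \<in> ker_dual \<phi>" and k: "\<phi> k = 0"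
  shows "f (left_defect \<phi> a k) = f (a * k) - \<phi> a * f k"
proof -
  have "\<phi> (a * k) = 0" "\<phi> (scaleC (- \<phi> a) k) = 0"
    using k by (simp_all add: character_mult[OF ch] character_scaleC[OF ch])
  have "f (left_defect \<phi> a k) = f (a * k + scaleC (- \<phi> a) k)"
    by (simp add: scaleC_minus_left)
  also have "\<dots> = f (a * k) + f (scaleC (- \<phi> a) k)"
    by (rule ker_dualD(2)[OF f]) fact+
  also have "f (scaleC (- \<phi> a) k) = - \<phi> a * f k"
    by (rule ker_dualD(3)[OF f k])
  finally show ?thesis by simp
qed

lemma in_dual_ker_dual_moduleD:
  assumes ch: "is_character \<phi>" and g: "in_dual (ker_dual_module \<phi>) g"
  shows "F \<in> ker_dual \<phi> \<Longrightarrow> G \<in> ker_dual \<phi> \<Longrightarrow>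
           g (embed_fun (\<lambda>k. F k + G k)) = g (embed_fun F) + g (embed_fun G)"
    and "F \<in> ker_dual \<phi> \<Longrightarrow> g (embed_fun (\<lambda>k. c * F k)) = c * g (embed_fun F)"
    and "\<exists>K. \<forall>F\<in>ker_dual \<phi>. cmod (g (embed_fun F)) \<le> K * ker_dual_norm \<phi> F \<and> 0 \<le> K"
proof -
  show "F \<in> ker_dual \<phi> \<Longrightarrow> G \<in> ker_dual \<phi> \<Longrightarrow>
          g (embed_fun (\<lambda>k. F k + G k)) = g (embed_fun F) + g (embed_fun G)"
    and "F \<in> ker_dual \<phi> \<Longrightarrow> g (embed_fun (\<lambda>k. c * F k)) = c * g (embed_fun F)"
    using g by (auto simp: in_dual_def ker_dual_module_simps)
  obtain K where "\<forall>F\<in>ker_dual \<phi>. cmod (g (embed_fun F)) \<le> K * ker_dual_norm \<phi> F"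
    using g by (auto simp: in_dual_def ker_dual_module_simps)
  then have "\<forall>F\<in>ker_dual \<phi>. cmod (g (embed_fun F)) \<le> \<bar>K\<bar> * ker_dual_norm \<phi> F \<and> 0 \<le> \<bar>K\<bar>"
    using ker_dual_norm_nonneg[OF ch] by (force intro: order_trans mult_right_mono)
  then show "\<exists>K. \<forall>F\<in>ker_dual \<phi>. cmod (g (embed_fun F)) \<le> K * ker_dual_norm \<phi> F \<and> 0 \<le> K" ..
qed

lemma in_dual_ker_dual_module_diff:
  assumes ch: "is_character \<phi>" and g: "in_dual (ker_dual_module \<phi>) g"
    and F: "F \<in> ker_dual \<phi>" and G: "G \<in> ker_dual \<phi>"
  shows "g (embed_fun (\<lambda>k. F k - G k)) = g (embed_fun F) - g (embed_fun G)"
  using in_dual_ker_dual_moduleD(1)[OF ch g F ker_dual_scale[OF G, of "-1"]]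
    in_dual_ker_dual_moduleD(2)[OF ch g G, of "-1"]
  by simp

lemma in_dual_ker_dual_module_sum:
  assumes ch: "is_character \<phi>" and g: "in_dual (ker_dual_module \<phi>) g"
    and "finite S" and "\<And>a. a \<in> S \<Longrightarrow> d a \<in> ker_dual \<phi>"
  shows "g (embed_fun (\<lambda>k. \<Sum>a\<in>S. d a k)) = (\<Sum>a\<in>S. g (embed_fun (d a)))"
  using assms(3,4)
proof (induction S rule: finite_induct)
  case empty
  then show ?case using in_dual_ker_dual_moduleD(2)[OF ch g zero_in_ker_dual, of 0] by simp
next
  case (insert a S)
  then show ?case
    by (simp add: in_dual_ker_dual_moduleD(1)[OF ch g] ker_dual_sum)
qed

text \<open>The commutators \<open>a\<cdot>g - g\<cdot>a\<close> are the composites of \<open>g\<close> with \<open>f \<mapsto> f(a\<cdot>) - \<phi>(a) f\<close>,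
  which sum to \<open>\<Sum>a\<in>S. f\<^sub>a(a k - \<phi>(a) k)\<close> on \<open>k \<in> ker \<phi>\<close>.\<close>

lemma sum_commutator_eq_0:
  assumes ch: "is_character \<phi>" and g: "in_dual (ker_dual_module \<phi>) g" and S: "finite S"
    and f: "\<And>a. a \<in> S \<Longrightarrow> f a \<in> ker_dual \<phi>"
    and f_ker: "\<And>k. \<phi> k = 0 \<Longrightarrow> (\<Sum>a\<in>S. f a (left_defect \<phi> a k)) = 0"
  shows "(\<Sum>a\<in>S. dlact (ker_dual_module \<phi>) a g (embed_fun (f a))
                  - dract (ker_dual_module \<phi>) g a (embed_fun (f a))) = 0"
proof -
  define d where "d a k = (if \<phi> k = 0 then f a (a * k) else 0) - \<phi> a * f a k" for a k
  have d_mem: "d a \<in> ker_dual \<phi>" if "a \<in> S" for a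
    unfolding d_def by (intro ker_dual_diff ker_dual_scale ker_dual_right_action[OF ch] f that)
  have commutator: "dlact (ker_dual_module \<phi>) a g (embed_fun (f a)) - dract (ker_dual_module \<phi>) g a (embed_fun (f a))
          = g (embed_fun (d a))" if "a \<in> S" for a
    unfolding d_def
    by (subst in_dual_ker_dual_module_diff[OF ch g ker_dual_right_action[OF ch f[OF that]] ker_dual_scale[OF f[OF that]]])
      (simp add: dlact_def dract_def ker_dual_module_simps cong: if_cong)
  have sum_d: "(\<lambda>k. \<Sum>a\<in>S. d a k) = (\<lambda>_. 0)"
  proof
    fix k
    show "(\<Sum>a\<in>S. d a k) = 0"
    proof (cases "\<phi> k = 0")
      case True
      then show ?thesis
        using f_ker[OF True] by (simp add: d_def ker_dual_apply_left_defect_kernel[OF ch f])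
    next
      case False
      then show ?thesis by (simp add: d_def ker_dualD(1)[OF f])
    qed
  qed
  have "(\<Sum>a\<in>S. dlact (ker_dual_module \<phi>) a g (embed_fun (f a))
                  - dract (ker_dual_module \<phi>) g a (embed_fun (f a))) = (\<Sum>a\<in>S. g (embed_fun (d a)))"
    by (rule sum.cong[OF refl commutator])
  also have "\<dots> = g (embed_fun (\<lambda>k. \<Sum>a\<in>S. d a k))"
    by (rule in_dual_ker_dual_module_sum[OF ch g S d_mem, symmetric])
  also have "\<dots> = 0"
    using in_dual_ker_dual_moduleD(2)[OF ch g zero_in_ker_dual, of 0] by (simp add: sum_d)
  finally show ?thesis .
qed

lemma norm_approx_inner_defect_le_dnorm:
  fixes \<phi> :: "'a::complex_banach_algebra \<Rightarrow> complex" and u a :: 'a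
  assumes ch: "is_character \<phi>" and g: "in_dual (ker_dual_module \<phi>) g"
    and f: "f \<in> ker_dual \<phi>" "ker_dual_norm \<phi> f \<le> 1"
  defines "H \<equiv> \<lambda>x. kernel_derivation \<phi> u a x
                   - (dlact (ker_dual_module \<phi>) a g x - dract (ker_dual_module \<phi>) g a x)"
  shows "cmod (H (embed_fun f)) \<le> dnorm (ker_dual_module \<phi>) H"
proof -
  obtain K where K: "\<And>F. F \<in> ker_dual \<phi> \<Longrightarrow> cmod (g (embed_fun F)) \<le> K * ker_dual_norm \<phi> F"
    and "0 \<le> K"
    using in_dual_ker_dual_moduleD(3)[OF ch g] by blast
  have g_le: "cmod (g (embed_fun F)) \<le> K * norm a"
    if "F \<in> ker_dual \<phi>" "ker_dual_norm \<phi> F \<le> norm a * ker_dual_norm \<phi> h" "ker_dual_norm \<phi> h \<le> 1" for F h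
    using K[OF that(1)] mult_left_mono[OF order_trans[OF that(2) mult_left_le[OF that(3)]] \<open>0 \<le> K\<close>]
    by simp
  have "cmod (H x) \<le> norm (left_defect \<phi> a u) + 2 * (K * norm a)"
    if x: "x \<in> bcarrier (ker_dual_module \<phi>)" "bnorm (ker_dual_module \<phi>) x \<le> 1" for x
  proof -
    obtain h where h: "h \<in> ker_dual \<phi>" "x = embed_fun h" "ker_dual_norm \<phi> h \<le> 1"
      using x by (auto simp: ker_dual_module_simps)
    have "cmod (kernel_derivation \<phi> u a x) \<le> 1 * norm (left_defect \<phi> a u)"
      using order_trans[OF norm_ker_dual_apply_le[OF ch h(1) character_left_defect[OF ch]]
          mult_right_mono[OF h(3) norm_ge_zero]]
      by (simp add: kernel_derivation_def h(2))
    moreover have "cmod (dlact (ker_dual_module \<phi>) a g x) \<le> K * norm a"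
      using g_le[OF ker_dual_right_action[OF ch h(1)] ker_dual_norm_right_action_le[OF ch h(1)] h(3)]
      by (simp add: dlact_def ker_dual_module_simps h(2) cong: if_cong)
    moreover have "cmod (dract (ker_dual_module \<phi>) g a x) \<le> K * norm a"
      using g_le[OF ker_dual_scale[OF h(1)] ker_dual_norm_left_action_le[OF ch h(1)] h(3)]
      by (simp add: dract_def ker_dual_module_simps h(2))
    moreover have "cmod (H x) \<le> cmod (kernel_derivation \<phi> u a x)
        + (cmod (dlact (ker_dual_module \<phi>) a g x) + cmod (dract (ker_dual_module \<phi>) g a x))"
      unfolding H_def by (rule order_trans[OF norm_triangle_ineq4 add_left_mono[OF norm_triangle_ineq4]])
    ultimately show ?thesis by linarith
  qed
  moreover have "embed_fun f \<in> bcarrier (ker_dual_module \<phi>)" "bnorm (ker_dual_module \<phi>) (embed_fun f) \<le> 1"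
    using f by (simp_all add: ker_dual_module_simps)
  ultimately show ?thesis by (intro dnorm_upper)
qed

lemma approximately_amenable_left_phi_approx_unit:
  fixes \<phi> :: "'a::complex_banach_algebra \<Rightarrow> complex"
  assumes ch: "is_character \<phi>" and aa: "approximately_amenable TYPE('a)"
    and S: "finite S" and \<epsilon>: "0 < \<epsilon>"
  shows "\<exists>v. \<phi> v = 1 \<and> (\<Sum>a\<in>S. norm (left_defect \<phi> a v)) < \<epsilon>"
proof (rule ccontr)
  assume "\<not> ?thesis"
  then have far: "\<And>v. \<phi> v = 1 \<Longrightarrow> \<epsilon> \<le> (\<Sum>a\<in>S. norm (left_defect \<phi> a v))" by force
  obtain u where u: "\<phi> u = 1" using character_obtain_unit[OF ch] by blast
  obtain f where f: "\<And>a. a \<in> S \<Longrightarrow> f a \<in> ker_dual \<phi>" "\<And>a. a \<in> S \<Longrightarrow> ker_dual_norm \<phi> (f a) \<le> 1"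
    and f_ker: "\<And>k. \<phi> k = 0 \<Longrightarrow> (\<Sum>a\<in>S. f a (left_defect \<phi> a k)) = 0"
    and f_u: "Re (\<Sum>a\<in>S. f a (left_defect \<phi> a u)) = \<epsilon> / 2"
    using separating_ker_dual_functionals[OF ch u S \<epsilon> far] by blast
  define M where "M = ker_dual_module \<phi>"
  define H where "H g a = (\<lambda>x. kernel_derivation \<phi> u a x - (dlact M a g x - dract M g a x))" for g a
  have "approx_inner M (kernel_derivation \<phi> u)"
    using aa banach_bimodule_ker_dual_module[OF ch] continuous_derivation_kernel_derivation[OF ch]
    unfolding approximately_amenable_def M_def by blast
  then obtain F where F: "F \<noteq> bot" "eventually (in_dual M) F"
    and lim: "\<And>a. ((\<lambda>g. dnorm M (H g a)) \<longlongrightarrow> 0) F"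
    unfolding approx_inner_def H_def by blast
  define \<eta> where "\<eta> = \<epsilon> / (2 * (real (card S) + 1))"
  have "\<eta> > 0" using \<epsilon> by (simp add: \<eta>_def)
  have "eventually (\<lambda>g. \<forall>a\<in>S. dnorm M (H g a) < \<eta>) F"
    by (intro eventually_ball_finite[OF S] ballI order_tendstoD(2)[OF lim \<open>\<eta> > 0\<close>])
  with F(2) have "eventually (\<lambda>g. in_dual M g \<and> (\<forall>a\<in>S. dnorm M (H g a) < \<eta>)) F"
    by (rule eventually_conj)
  then obtain g where g: "in_dual M g" and small: "\<And>a. a \<in> S \<Longrightarrow> dnorm M (H g a) < \<eta>"
    using eventually_happens'[OF F(1)] by blast
  have "(\<Sum>a\<in>S. H g a (embed_fun (f a))) = (\<Sum>a\<in>S. f a (left_defect \<phi> a u))"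
    using sum_commutator_eq_0[OF ch g[unfolded M_def] S f(1) f_ker]
    by (simp add: H_def M_def kernel_derivation_def sum_subtractf)
  then have "\<epsilon> / 2 \<le> cmod (\<Sum>a\<in>S. H g a (embed_fun (f a)))"
    using f_u complex_Re_le_cmod by metis
  also have "\<dots> \<le> (\<Sum>a\<in>S. cmod (H g a (embed_fun (f a))))" by (rule norm_sum)
  also have "\<dots> \<le> (\<Sum>a\<in>S. \<eta>)"
  proof (rule sum_mono)
    fix a assume "a \<in> S"
    have "cmod (H g a (embed_fun (f a))) \<le> dnorm M (H g a)"
      unfolding H_def M_def
      by (rule norm_approx_inner_defect_le_dnorm[OF ch g[unfolded M_def] f(1,2)[OF \<open>a \<in> S\<close>]])
    then show "cmod (H g a (embed_fun (f a))) \<le> \<eta>" using small[OF \<open>a \<in> S\<close>] by simp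
  qed
  also have "\<dots> < \<epsilon> / 2" using \<epsilon> by (simp add: \<eta>_def field_simps)
  finally show False by simp
qed

lemma left_phi_approx_unit_filter:
  fixes \<phi> :: "'a::complex_banach_algebra \<Rightarrow> complex"
  assumes units: "\<And>S e. finite S \<Longrightarrow> 0 < e \<Longrightarrow> \<exists>v. \<phi> v = 1 \<and> (\<Sum>a\<in>S. norm (left_defect \<phi> a v)) < e"
  obtains F where "F \<noteq> bot" "eventually (\<lambda>v. \<phi> v = 1) F"
    and "\<And>a. ((\<lambda>v. norm (left_defect \<phi> a v)) \<longlongrightarrow> 0) F"
proof -
  define good where "good = (\<lambda>(S, e). {v. \<phi> v = 1 \<and> (\<Sum>a\<in>S. norm (left_defect \<phi> a v)) < e})"
  define I where "I = {(S :: 'a set, e :: real). finite S \<and> 0 < e}"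
  define F where "F = (INF i\<in>I. principal (good i))"
  have ev: "eventually P F \<longleftrightarrow> (\<exists>i\<in>I. \<forall>v\<in>good i. P v)" for P
    unfolding F_def eventually_principal[symmetric]
  proof (rule eventually_INF_base)
    have "({}, 1) \<in> I" by (simp add: I_def)
    then show "I \<noteq> {}" by blast
    fix i j assume "i \<in> I" "j \<in> I"
    then obtain S\<^sub>1 e\<^sub>1 S\<^sub>2 e\<^sub>2 where ij: "i = (S\<^sub>1, e\<^sub>1)" "j = (S\<^sub>2, e\<^sub>2)"
      and fin: "finite S\<^sub>1" "finite S\<^sub>2" and e: "0 < e\<^sub>1" "0 < e\<^sub>2"
      unfolding I_def by blast
    have le: "(\<Sum>a\<in>T. norm (left_defect \<phi> a v)) \<le> (\<Sum>a\<in>S\<^sub>1 \<union> S\<^sub>2. norm (left_defect \<phi> a v))"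
      if "T \<subseteq> S\<^sub>1 \<union> S\<^sub>2" for T v
      by (rule sum_mono2) (use fin that in auto)
    have "good (S\<^sub>1 \<union> S\<^sub>2, min e\<^sub>1 e\<^sub>2) \<subseteq> good i \<inter> good j"
      unfolding ij good_def using le[OF Un_upper1] le[OF Un_upper2]
      by (auto intro: order_le_less_trans)
    moreover have "(S\<^sub>1 \<union> S\<^sub>2, min e\<^sub>1 e\<^sub>2) \<in> I" using fin e by (simp add: I_def)
    ultimately show "\<exists>k\<in>I. principal (good k) \<le> inf (principal (good i)) (principal (good j))"
      by (auto simp: inf_principal)
  qed
  have "good i \<noteq> {}" if "i \<in> I" for i
    using that units unfolding I_def good_def by auto
  then have "F \<noteq> bot"
    unfolding trivial_limit_def ev by auto
  moreover have "eventually (\<lambda>v. \<phi> v = 1) F"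
    unfolding ev by (rule bexI[of _ "({}, 1)"]) (auto simp: I_def good_def)
  moreover have "((\<lambda>v. norm (left_defect \<phi> a v)) \<longlongrightarrow> 0) F" for a
  proof (rule order_tendstoI)
    fix e :: real assume "0 < e"
    show "eventually (\<lambda>v. norm (left_defect \<phi> a v) < e) F"
      unfolding ev by (rule bexI[of _ "({a}, e)"]) (use \<open>0 < e\<close> in \<open>auto simp: I_def good_def\<close>)
  next
    fix e :: real assume "e < 0"
    then show "eventually (\<lambda>v. e < norm (left_defect \<phi> a v)) F"
      by (intro always_eventually allI) (rule order_less_le_trans[OF _ norm_ge_zero])
  qed
  ultimately show ?thesis by (rule that)
qed

lemma pnorm_tdefect_tsingle_le: "pnorm (tdefect \<phi> a (tsingle v w)) \<le> norm (left_defect \<phi> a v) * norm w"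
proof -
  have "teq (tsingle (left_defect \<phi> a v) w) (tdefect \<phi> a (tsingle v w))"
    unfolding teq_def tlact_tsingle tscale_tsingle
    by (simp add: tev_tdiff trep_tsingle tev_tsingle bounded_bilinear_form_diff_left bounded_bilinear_formD(2))
  then show ?thesis using pnorm_le_tnorm[OF trep_tsingle] by (simp add: tnorm_tsingle)
qed

lemma approximately_amenable_left_phi_approx_diagonal:
  fixes \<phi> :: "'a::complex_banach_algebra \<Rightarrow> complex"
  assumes ch: "is_character \<phi>" and aa: "approximately_amenable TYPE('a)"
  obtains G where "left_phi_approx_diagonal \<phi> G"
proof -
  obtain F where F: "F \<noteq> bot" and unit: "eventually (\<lambda>v. \<phi> v = 1) F"
    and defect: "\<And>a. ((\<lambda>v. norm (left_defect \<phi> a v)) \<longlongrightarrow> 0) F"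
    using left_phi_approx_unit_filter[OF approximately_amenable_left_phi_approx_unit[OF ch aa]] by blast
  obtain w where w: "\<phi> w = 1" using character_obtain_unit[OF ch] by blast
  have "((\<lambda>v. pnorm (tdefect \<phi> a (tsingle v w))) \<longlongrightarrow> 0) F" for a
    by (rule Lim_null_comparison[OF _ tendsto_mult_left_zero[OF defect, of a "norm w"]])
      (simp add: pnorm_tdefect_tsingle_le pnorm_nonneg trep_tdiff trep_tlact trep_tscale trep_tsingle)
  moreover have "((\<lambda>v. \<phi> (tpi (tsingle v w))) \<longlongrightarrow> 1) F"
    using unit by (intro tendsto_eventually) (simp add: eventually_mono tpi_tsingle character_mult[OF ch] w)
  ultimately have "left_phi_approx_diagonal \<phi> (filtermap (\<lambda>v. tsingle v w) F)"
    using F unfolding left_phi_approx_diagonal_def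
    by (simp add: filtermap_bot_iff eventually_filtermap filterlim_filtermap o_def trep_tsingle)
  then show ?thesis by (rule that)
qed

theorem mainTheorem5:
  fixes \<phi> :: "'a::complex_banach_algebra \<Rightarrow> complex"
  assumes "is_character \<phi>"
    and "pseudo_amenable TYPE('a) \<or> approximately_amenable TYPE('a)"
  shows "approx_left_phi_biprojective \<phi>"
proof -
  obtain G where "left_phi_approx_diagonal \<phi> G"
    using assms(2) pseudo_amenable_left_phi_approx_diagonal[OF assms(1)]
      approximately_amenable_left_phi_approx_diagonal[OF assms(1)] by blast
  then show ?thesis by (rule approx_left_phi_biprojective_if_diagonal[OF assms(1)])
qed

end
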